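(* With $\tau=(\sigma_{n-1}\cdots\sigma_1)^n\in B_n$, \[\Phi(\tau)=\sum_{k=0}^{n-1}q^{n(n-1-2k)}\pi_k\] as endomorphisms of $V^{\otimes n}$.
   Context: Let $U=U_q(\mathfrak{gl}(1|1))$ be the unital superalgebra over $\mathbb{C}(q)$ generated by odd elements $E,F$ and even elements $\mathbf q^h$ ($h\in P^*=\mathbb{Z}h_1\oplus\mathbb{Z}h_2$) with relations $\mathbf q^0=1$, $\mathbf q^h\mathbf q^{h'}=\mathbf q^{h+h'}$, $\mathbf q^hE=q^{\langle h,\alpha\rangle}E\mathbf q^h$, $\mathbf q^hF=q^{-\langle h,\alpha\rangle}F\mathbf q^h$, $EF+FE=\frac{K-K^{-1}}{q-q^{-1}}$ with $K=\mathbf q^{h_1+h_2}$, $E^2=F^2=0$; here $P=\mathbb{Z}\epsilon_1\oplus\mathbb{Z}\epsilon_2$ with $\{\epsilon_1,\epsilon_2\}$ dual to $\{h_1,h_2\}$ and $\alpha=\epsilon_1-\epsilon_2$. Comultiplication: $\Delta(E)=E\otimes K^{-1}+1\otimes E$, $\Delta(F)=F\otimes1+K\otimes F$, $\Delta(\mathbf q^h)=\mathbf q^h\otimes\mathbf q^h$; on tensor products one uses the Koszul sign rule $(X\otimes Y)(a\otimes b)=(-1)^{|Y||a|}Xa\otimes Yb$. $V$ has basis $v_0$ (even), $v_1$ (odd) with $Ev_0=0,Ev_1=v_0,Fv_0=v_1,Fv_1=0$, $\mathbf q^hv_0=q^{\langle h,\epsilon_1\rangle}v_0$, $\mathbf q^hv_1=q^{\langle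 h,\epsilon_2\rangle}v_1$. Fix $n\ge2$; $U$ acts on $V^{\otimes n}$ via iterated comultiplication. For $0\le k\le n-1$, $H_k=\{v\in V^{\otimes n}: Ev=0,\ \mathbf q^hv=q^{\langle h,(n-k)\epsilon_1+k\epsilon_2\rangle}v\ \forall h\in P^*\}$ and $W_k=H_k\oplus F(H_k)$; one has $V^{\otimes n}=\bigoplus_{k=0}^{n-1}W_k$, and $\pi_k:V^{\otimes n}\to V^{\otimes n}$ denotes the projection onto $W_k$ along this decomposition. Braid action: $\check R:V\otimes V\to V\otimes V$ is given by $\check R(v_0\otimes v_0)=qv_0\otimes v_0$, $\check R(v_1\otimes v_0)=v_0\otimes v_1$, $\check R(v_0\otimes v_1)=v_1\otimes v_0+(q-q^{-1})v_0\otimes v_1$, $\check R(v_1\otimes v_1)=-q^{-1}v_1\otimes v_1$; $\Phi(\sigma_t)=\mathrm{id}^{\otimes(t-1)}\otimes\check R\otimes\mathrm{id}^{\otimes(n-t-1)}$ defines an action $\Phi:B_n\to\mathrm{End}_U(V^{\otimes n})$. *)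

theory Defs
  imports Complex_Main "HOL-Computational_Algebra.Polynomial" "HOL-Computational_Algebra.Fraction_Field"
begin

type_synonym K = "complex poly fract"

definition qq :: K where "qq = Fract [:0, 1:] 1"

text \<open>Basis of V: False = v0 (even), True = v1 (odd).  A basis vector of
  V tensor n is a bool list of length n; vectors are coefficient functions on bool
  lists, required to vanish outside length n.\<close>
type_synonym vec = "bool list \<Rightarrow> K"

definition Vn :: "nat \<Rightarrow> vec set" where
  "Vn n = {v. \<forall>w. length w \<noteq> n \<longrightarrow> v w = 0}"

definition basis :: "nat \<Rightarrow> bool list set" where
  "basis n = {w. length w = n}"

text \<open>Operators on V: matrix (output, input) together with a parity (True = odd).\<close>
type_synonym op1 = "(bool \<Rightarrow> bool \<Rightarrow> K) \<times> bool"

definition E1 :: op1 where "E1 = ((\<lambda>y x. if y = False \<and> x = True then 1 else 0), True)"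
definition F1 :: op1 where "F1 = ((\<lambda>y x. if y = True \<and> x = False then 1 else 0), True)"
text \<open>q^h for h = a h1 + b h2: v0 |-> q^a v0, v1 |-> q^b v1.\<close>
definition qh1 :: "int \<Rightarrow> int \<Rightarrow> op1" where
  "qh1 a b = ((\<lambda>y x. if y = x then (if x then qq powi b else qq powi a) else 0), False)"
definition K1 :: op1 where "K1 = qh1 1 1"
definition Kinv1 :: op1 where "Kinv1 = qh1 (-1) (-1)"
definition id1 :: op1 where "id1 = qh1 0 0"

text \<open>Action of a pure tensor X_1 \<otimes> ... \<otimes> X_n on a basis vector with the Koszul
  sign rule: (X_1\<otimes>..\<otimes>X_n)(a_1\<otimes>..\<otimes>a_n) = (-1)^(sum_{i<j} |X_j||a_i|) X_1 a_1\<otimes>..\<otimes>X_n a_n.\<close>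
definition tens_mat :: "op1 list \<Rightarrow> bool list \<Rightarrow> bool list \<Rightarrow> K" where
  "tens_mat Xs u w =
     (-1) ^ card {(i, j). i < j \<and> j < length Xs \<and> snd (Xs ! j) \<and> w ! i}
     * (\<Prod>j<length Xs. fst (Xs ! j) (u ! j) (w ! j))"

definition tens_app :: "op1 list \<Rightarrow> vec \<Rightarrow> vec" where
  "tens_app Xs v = (\<lambda>u. if length u = length Xs
      then (\<Sum>w\<in>basis (length Xs). tens_mat Xs u w * v w) else 0)"

text \<open>An element of U tensor n, written as a list of pure tensors (to be summed).\<close>
definition sum_app :: "op1 list list \<Rightarrow> vec \<Rightarrow> vec" where
  "sum_app Ts v = (\<lambda>u. \<Sum>X\<leftarrow>Ts. tens_app X v u)"

text \<open>Iterated comultiplication Delta^(n) = (Delta^(n-1) \<otimes> id) o Delta, with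
  Delta(E) = E\<otimes>K^-1 + 1\<otimes>E, Delta(F) = F\<otimes>1 + K\<otimes>F, Delta(q^h) = q^h\<otimes>q^h.\<close>
fun DeltaE :: "nat \<Rightarrow> op1 list list" where
  "DeltaE 0 = []"
| "DeltaE (Suc 0) = [[E1]]"
| "DeltaE (Suc (Suc m)) = map (\<lambda>t. t @ [Kinv1]) (DeltaE (Suc m)) @ [replicate (Suc m) id1 @ [E1]]"

fun DeltaF :: "nat \<Rightarrow> op1 list list" where
  "DeltaF 0 = []"
| "DeltaF (Suc 0) = [[F1]]"
| "DeltaF (Suc (Suc m)) = map (\<lambda>t. t @ [id1]) (DeltaF (Suc m)) @ [replicate (Suc m) K1 @ [F1]]"

definition Eop :: "nat \<Rightarrow> vec \<Rightarrow> vec" where "Eop n = sum_app (DeltaE n)"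
definition Fop :: "nat \<Rightarrow> vec \<Rightarrow> vec" where "Fop n = sum_app (DeltaF n)"
definition qhop :: "nat \<Rightarrow> int \<Rightarrow> int \<Rightarrow> vec \<Rightarrow> vec" where
  "qhop n a b = tens_app (replicate n (qh1 a b))"

definition smult_vec :: "K \<Rightarrow> vec \<Rightarrow> vec" where "smult_vec c v = (\<lambda>w. c * v w)"

text \<open>H_k: highest weight vectors of weight (n-k) eps1 + k eps2; for h = a h1 + b h2,
  <h, (n-k) eps1 + k eps2> = a(n-k) + b k.\<close>
definition H :: "nat \<Rightarrow> nat \<Rightarrow> vec set" where
  "H n k = {v \<in> Vn n. Eop n v = (\<lambda>_. 0) \<and>
     (\<forall>a b. qhop n a b v = smult_vec (qq powi (a * (int n - int k) + b * int k)) v)}"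

definition W :: "nat \<Rightarrow> nat \<Rightarrow> vec set" where
  "W n k = {(\<lambda>w. x w + Fop n y w) | x y. x \<in> H n k \<and> y \<in> H n k}"

definition proj :: "nat \<Rightarrow> nat \<Rightarrow> vec \<Rightarrow> vec" where
  "proj n k v = (THE x. \<exists>ws. (\<forall>j<n. ws j \<in> W n j) \<and> v = (\<lambda>w. \<Sum>j<n. ws j w) \<and> x = ws k)"

text \<open>The R-matrix on V\<otimes>V, as matrix (output pair, input pair).\<close>
definition Rmat :: "bool \<times> bool \<Rightarrow> bool \<times> bool \<Rightarrow> K" where
  "Rmat out inp = (case inp of
      (False, False) \<Rightarrow> (if out = (False, False) then qq else 0)
    | (True, False) \<Rightarrow> (if out = (False, True) then 1 else 0)
    | (False, True) \<Rightarrow> (if out = (True, False) then 1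
                       else if out = (False, True) then qq - inverse qq else 0)
    | (True, True) \<Rightarrow> (if out = (True, True) then - inverse qq else 0))"

text \<open>Phi(sigma_t) = id^(t-1) \<otimes> R \<otimes> id^(n-t-1) (R is even, so no Koszul signs);
  it acts on tensor positions t and t+1 (1-indexed), i.e. list indices t-1 and t.\<close>
definition Phi_sigma :: "nat \<Rightarrow> nat \<Rightarrow> vec \<Rightarrow> vec" where
  "Phi_sigma n t v = (\<lambda>u. if length u = n then
      (\<Sum>w\<in>basis n. (if (\<forall>j<n. j \<noteq> t - 1 \<and> j \<noteq> t \<longrightarrow> u ! j = w ! j)
                      then Rmat (u ! (t - 1), u ! t) (w ! (t - 1), w ! t) else 0) * v w)
      else 0)"

text \<open>Phi(sigma_{n-1} ... sigma_1) = Phi(sigma_{n-1}) o ... o Phi(sigma_1).\<close>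
definition Phi_cyc :: "nat \<Rightarrow> vec \<Rightarrow> vec" where
  "Phi_cyc n = fold (\<lambda>t acc. Phi_sigma n t \<circ> acc) [1..<n] id"

definition Phi_tau :: "nat \<Rightarrow> vec \<Rightarrow> vec" where
  "Phi_tau n = Phi_cyc n ^^ n"

end

theory Submission
  imports Defs
begin

text \<open>Identify \<open>V\<^sup>\<otimes>\<^sup>n\<close> with the exterior algebra on \<open>n\<close> generators, a factor \<open>v\<^sub>1\<close> in
  position \<open>j\<close> being the generator \<open>e\<^sub>j\<close>. Then \<open>F\<close> and \<open>E\<close> become a creation and an
  annihilation operator, and each \<open>\<Phi>(\<sigma>\<^sub>t)\<close> is \<open>q (1 - r \<and> \<iota>\<^sub>r)\<close> for a vector \<open>r\<close> supported on
  the positions \<open>t - 1, t\<close>. Such operators are determined by their value on the vacuum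
  \<open>v\<^sub>0 \<otimes> \<dots> \<otimes> v\<^sub>0\<close> together with the linear map by which they conjugate creation operators;
  computing that map for \<open>\<tau>\<close> identifies \<open>\<Phi>(\<tau>)\<close> with \<open>q\<^sup>n\<^sup>(\<^sup>n\<^sup>-\<^sup>1\<^sup>)\<^sup>-\<^sup>2\<^sup>n\<^sup>k (1 + \<mu> F E)\<close> on the
  part with \<open>k\<close> odd factors. On \<open>H\<^sub>k\<close> (where \<open>E = 0\<close>) and on \<open>F(H\<^sub>k)\<close> (one more odd factor,
  and \<open>EF = [n]\<^sub>q\<close>) this is the scalar \<open>q\<^sup>n\<^sup>(\<^sup>n\<^sup>-\<^sup>1\<^sup>-\<^sup>2\<^sup>k\<^sup>)\<close>. Finally \<open>EF + FE = [n]\<^sub>q\<close> is invertible, which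
  gives the projections onto the \<open>W\<^sub>k\<close> explicitly.\<close>

lemma two_neq_zero_K: "(2::K) \<noteq> 0"
proof -
  have "(of_nat 2 :: K) = Fract (of_nat 2) 1" by (rule of_nat_fract)
  moreover have "Fract (of_nat 2 :: complex poly) 1 \<noteq> Fract 0 1" by (simp add: eq_fract)
  ultimately show ?thesis by (simp add: Zero_fract_def)
qed

lemma K_eq_neg_imp_zero: "(x::K) = - x \<Longrightarrow> x = 0"
proof -
  assume "x = - x"
  hence "2 * x = 0" by (metis add.right_inverse mult_2)
  thus "x = 0" using two_neq_zero_K by simp
qed

lemma double_sum_antisym:
  assumes "finite S" "\<And>j k. j \<in> S \<Longrightarrow> k \<in> S \<Longrightarrow> a j k = - a k j"
  shows "(\<Sum>j\<in>S. \<Sum>k\<in>S. a j k) = (0::K)"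
proof (rule K_eq_neg_imp_zero)
  have "(\<Sum>j\<in>S. \<Sum>k\<in>S. a j k) = (\<Sum>k\<in>S. \<Sum>j\<in>S. a j k)" by (rule sum.swap)
  also have "\<dots> = (\<Sum>k\<in>S. \<Sum>j\<in>S. - a k j)" by (intro sum.cong refl assms(2))
  also have "\<dots> = - (\<Sum>k\<in>S. \<Sum>j\<in>S. a k j)" by (simp add: sum_negf)
  finally show "(\<Sum>j\<in>S. \<Sum>k\<in>S. a j k) = - (\<Sum>j\<in>S. \<Sum>k\<in>S. a j k)" .
qed

lemma sum_eq_single:
  "finite S \<Longrightarrow> w0 \<in> S \<Longrightarrow> (\<And>w. w \<in> S \<Longrightarrow> w \<noteq> w0 \<Longrightarrow> f w = 0) \<Longrightarrow> sum f S = (f w0 :: 'a::comm_monoid_add)"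
  by (subst sum.mono_neutral_right[of S "{w0}"]) auto

lemma sum_two_nonzero:
  "a < (n::nat) \<Longrightarrow> b < n \<Longrightarrow> a \<noteq> b \<Longrightarrow> (\<And>j. j < n \<Longrightarrow> j \<noteq> a \<Longrightarrow> j \<noteq> b \<Longrightarrow> f j = 0) \<Longrightarrow>
   (\<Sum>j<n. f j) = f a + (f b :: 'a::comm_monoid_add)"
  by (subst sum.mono_neutral_right[of "{..<n}" "{a, b}"]) auto

lemma qq_neq_0: "qq \<noteq> 0"
  unfolding qq_def by (simp add: eq_fract Zero_fract_def)

lemma qq_powi_add: "qq powi a * qq powi b = qq powi (a + b)"
  by (rule power_int_add[symmetric]) (simp add: qq_neq_0)

lemma qq_power_inject: "qq ^ m = qq ^ k \<Longrightarrow> m = k"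
proof -
  have qp: "qq ^ m = Fract (monom 1 m) 1" for m
    unfolding qq_def by (induction m) (auto simp: eq_fract monom_Suc One_fract_def mult.commute)
  assume "qq ^ m = qq ^ k" thus "m = k" by (simp add: qp eq_fract monom_eq_iff')
qed

section \<open>Koszul signs\<close>

lemma list_update_eq_self: "xs ! i = x \<Longrightarrow> xs[i := x] = xs"
  by (erule subst) (rule list_update_id)

text \<open>\<open>ksign u j\<close> is the sign an odd operator acquires by passing the first \<open>j\<close> tensor
  factors of the basis vector \<open>u\<close>.\<close>

definition ones_before :: "bool list \<Rightarrow> nat \<Rightarrow> nat" where
  "ones_before u j = card {i. i < j \<and> u ! i}"

definition ksign :: "bool list \<Rightarrow> nat \<Rightarrow> K" where
  "ksign u j = (-1) ^ ones_before u j"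

lemma ksign_sq: "ksign u j * ksign u j = 1"
  unfolding ksign_def by (simp add: power_add[symmetric])

lemma ksign_sq_left: "ksign u j * (ksign u j * x) = x"
  by (simp add: mult.assoc[symmetric] ksign_sq)

lemma ones_before_update_ge: "j \<le> k \<Longrightarrow> ones_before (u[k:=x]) j = ones_before u j"
  unfolding ones_before_def by (rule arg_cong[where f=card]) (auto simp: nth_list_update)

lemma ksign_update_ge: "j \<le> k \<Longrightarrow> ksign (u[k:=x]) j = ksign u j"
  by (simp add: ksign_def ones_before_update_ge)

lemma ones_before_split:
  "k < j \<Longrightarrow> ones_before u j = card {i. i < j \<and> i \<noteq> k \<and> u ! i} + (if u ! k then 1 else 0)"
proof -
  assume kj: "k < j"
  have fin: "finite {i. i < j \<and> i \<noteq> k \<and> u ! i}" by auto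
  show ?thesis
  proof (cases "u ! k")
    case True
    hence "{i. i < j \<and> u ! i} = insert k {i. i < j \<and> i \<noteq> k \<and> u ! i}" using kj by auto
    thus ?thesis using True fin unfolding ones_before_def by simp
  next
    case False
    hence "{i. i < j \<and> u ! i} = {i. i < j \<and> i \<noteq> k \<and> u ! i}" by auto
    thus ?thesis using False unfolding ones_before_def by simp
  qed
qed

lemma ones_before_clear:
  assumes "i < j" "i < length u" "u ! i"
  shows "ones_before u j = Suc (ones_before (u[i:=False]) j)"
proof -
  have "{k. k < j \<and> k \<noteq> i \<and> u[i:=False] ! k} = {k. k < j \<and> k \<noteq> i \<and> u ! k}"
    by (intro Collect_cong) (metis nth_list_update_neq)
  thus ?thesis using ones_before_split[OF assms(1), of u] ones_before_split[OF assms(1), of "u[i:=False]"] assms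
    by simp
qed

lemma ksign_update_lt:
  "k < j \<Longrightarrow> k < length u \<Longrightarrow> ksign (u[k:=x]) j = (if x = u ! k then ksign u j else - ksign u j)"
proof -
  assume kj: "k < j" and kl: "k < length u"
  have e: "{i. i < j \<and> i \<noteq> k \<and> u[k:=x] ! i} = {i. i < j \<and> i \<noteq> k \<and> u ! i}"
    by (intro Collect_cong) (metis nth_list_update_neq)
  have c1: "ones_before (u[k:=x]) j = card {i. i < j \<and> i \<noteq> k \<and> u ! i} + (if x then 1 else 0)"
    using ones_before_split[OF kj, of "u[k:=x]"] unfolding e nth_list_update_eq[OF kl] .
  have c2: "ones_before u j = card {i. i < j \<and> i \<noteq> k \<and> u ! i} + (if u!k then 1 else 0)"
    using ones_before_split[OF kj, of u] by simp
  show ?thesis unfolding ksign_def c1 c2 by (cases x; cases "u!k") (simp_all add: power_add)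
qed

lemma ksign_swap:
  assumes "j < length u" "k < length u" "j \<noteq> k" "x \<noteq> u ! j" "y \<noteq> u ! k"
  shows "ksign u j * ksign (u[j:=x]) k = - (ksign u k * ksign (u[k:=y]) j)"
  using assms by (cases "j < k") (simp_all add: ksign_update_lt ksign_update_ge)

lemma ksign_Suc: "ksign u (Suc a) = (if u ! a then - ksign u a else ksign u a)"
proof -
  have "ones_before u (Suc a) = card {i. i < Suc a \<and> i \<noteq> a \<and> u ! i} + (if u ! a then 1 else 0)"
    by (rule ones_before_split) simp
  moreover have "{i. i < Suc a \<and> i \<noteq> a \<and> u ! i} = {i. i < a \<and> u ! i}" by auto
  ultimately show ?thesis by (simp add: ksign_def ones_before_def)
qed

section \<open>Fermionic creation and annihilation operators\<close>

text \<open>Reading a basis vector \<open>u\<close> as the exterior monomial of the positions carrying \<open>v\<^sub>1\<close>,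
  \<open>wedge n c\<close> is left multiplication by \<open>\<Sum> c\<^sub>j e\<^sub>j\<close> and \<open>contract n c\<close> is the contraction
  with \<open>\<Sum> c\<^sub>j e\<^sub>j\<^sup>*\<close>.\<close>

definition fermion_op :: "bool \<Rightarrow> nat \<Rightarrow> (nat \<Rightarrow> K) \<Rightarrow> vec \<Rightarrow> vec" where
  "fermion_op s n c v = (\<lambda>u. if length u = n
     then (\<Sum>j<n. if u ! j = s then ksign u j * c j * v (u[j := \<not> s]) else 0) else 0)"

abbreviation wedge :: "nat \<Rightarrow> (nat \<Rightarrow> K) \<Rightarrow> vec \<Rightarrow> vec" where
  "wedge \<equiv> fermion_op True"

abbreviation contract :: "nat \<Rightarrow> (nat \<Rightarrow> K) \<Rightarrow> vec \<Rightarrow> vec" where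
  "contract \<equiv> fermion_op False"

lemma wedge_apply:
  "length u = n \<Longrightarrow> wedge n x v u = (\<Sum>j<n. if u!j then ksign u j * x j * v (u[j:=False]) else 0)"
  by (simp add: fermion_op_def cong: if_cong)

lemma contract_apply:
  "length u = n \<Longrightarrow> contract n b v u = (\<Sum>j<n. if u!j then 0 else ksign u j * b j * v (u[j:=True]))"
  by (auto simp: fermion_op_def intro!: sum.cong)

lemma fermion_op_apply:
  "length u = n \<Longrightarrow> fermion_op s n c v u = (\<Sum>j<n. if u ! j = s then ksign u j * c j * v (u[j := \<not> s]) else 0)"
  by (simp add: fermion_op_def)

lemma fermion_op_apply_bad_length: "length u \<noteq> n \<Longrightarrow> fermion_op s n c v u = 0"
  by (simp add: fermion_op_def)

lemma fermion_op_Vn: "fermion_op s n c v \<in> Vn n"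
  by (simp add: Vn_def fermion_op_def)

lemma fermion_op_add: "fermion_op s n c (\<lambda>u. v1 u + v2 u) = (\<lambda>u. fermion_op s n c v1 u + fermion_op s n c v2 u)"
  unfolding fun_eq_iff by (auto simp: fermion_op_def sum.distrib[symmetric] algebra_simps intro!: sum.cong)

lemma fermion_op_smult: "fermion_op s n c (\<lambda>u. a * v u) = (\<lambda>u. a * fermion_op s n c v u)"
  unfolding fun_eq_iff by (auto simp: fermion_op_def sum_distrib_left algebra_simps intro!: sum.cong)

lemma fermion_op_zero: "fermion_op s n c (\<lambda>u. 0) = (\<lambda>u. 0)"
  by (simp add: fermion_op_def fun_eq_iff cong: if_cong)

lemma fermion_op_diff: "fermion_op s n c (\<lambda>u. v1 u - v2 u) = (\<lambda>u. fermion_op s n c v1 u - fermion_op s n c v2 u)"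
  unfolding fun_eq_iff fermion_op_def by (auto simp: sum_subtractf[symmetric] right_diff_distrib intro!: sum.cong)

lemma fermion_op_add_coeff: "fermion_op s n (\<lambda>j. x j + y j) v = (\<lambda>u. fermion_op s n x v u + fermion_op s n y v u)"
  unfolding fun_eq_iff by (auto simp: fermion_op_def sum.distrib[symmetric] algebra_simps intro!: sum.cong)

lemma fermion_op_smult_coeff: "fermion_op s n (\<lambda>j. a * x j) v = (\<lambda>u. a * fermion_op s n x v u)"
  unfolding fun_eq_iff by (auto simp: fermion_op_def sum_distrib_left algebra_simps intro!: sum.cong)

lemma fermion_op_cong: "(\<And>j. j < n \<Longrightarrow> x j = y j) \<Longrightarrow> fermion_op s n x v = fermion_op s n y v"
  unfolding fermion_op_def by (intro ext if_cong refl sum.cong) auto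

lemma fermion_op_two_nonzero_coeffs:
  assumes "length u = n" "a < n" "b < n" "a \<noteq> b" "\<And>j. j \<noteq> a \<Longrightarrow> j \<noteq> b \<Longrightarrow> c j = 0"
  shows "fermion_op s n c v u =
    (if u!a = s then ksign u a * c a * v (u[a := \<not> s]) else 0) +
    (if u!b = s then ksign u b * c b * v (u[b := \<not> s]) else 0)"
  unfolding fermion_op_def using assms by (simp add: sum_two_nonzero)

lemma fermion_op_square_term_antisym:
  assumes len: "j < length u" "k < length u"
  shows "(if u!j = s \<and> u!k = s \<and> j \<noteq> k
            then ksign u j * ksign (u[j := \<not> s]) k * c j * c k * v (u[j := \<not> s, k := \<not> s]) else 0) =
       - (if u!k = s \<and> u!j = s \<and> k \<noteq> j
            then ksign u k * ksign (u[k := \<not> s]) j * c k * c j * v (u[k := \<not> s, j := \<not> s]) else 0)"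
proof (cases "u!j = s \<and> u!k = s \<and> j \<noteq> k")
  case c: True
  have sgn: "ksign u j * ksign (u[j := \<not> s]) k = - (ksign u k * ksign (u[k := \<not> s]) j)"
    by (rule ksign_swap) (use c len in auto)
  have upd: "u[j := \<not> s, k := \<not> s] = u[k := \<not> s, j := \<not> s]"
    by (rule list_update_swap) (use c in auto)
  have "ksign u j * ksign (u[j := \<not> s]) k * c j * c k * v (u[k := \<not> s, j := \<not> s]) =
      - (ksign u k * ksign (u[k := \<not> s]) j * c k * c j * v (u[k := \<not> s, j := \<not> s]))"
    unfolding sgn by (simp add: mult_ac)
  moreover have "u!k = s \<and> u!j = s \<and> k \<noteq> j" using c by blast
  ultimately show ?thesis using c unfolding upd by (simp only: if_True simp_thms)
next
  case False
  moreover have "\<not> (u!k = s \<and> u!j = s \<and> k \<noteq> j)" using False by blast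
  ultimately show ?thesis by (simp only: if_False) simp
qed

lemma fermion_op_square: "fermion_op s n c (fermion_op s n c v) = (\<lambda>u. 0)"
proof
  fix u show "fermion_op s n c (fermion_op s n c v) u = 0"
  proof (cases "length u = n")
    case False thus ?thesis by (simp add: fermion_op_apply_bad_length)
  next
    case len: True
    define a where "a j k = (if u!j = s \<and> u!k = s \<and> j \<noteq> k
      then ksign u j * ksign (u[j := \<not> s]) k * c j * c k * v (u[j := \<not> s, k := \<not> s]) else 0)" for j k
    have inner: "(if u!j = s then ksign u j * c j * fermion_op s n c v (u[j := \<not> s]) else 0) = (\<Sum>k<n. a j k)"
      if j: "j < n" for j
    proof (cases "u!j = s")
      case uj: True
      have "ksign u j * c j * fermion_op s n c v (u[j := \<not> s]) = (\<Sum>k<n. ksign u j * c j *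
          (if u[j := \<not> s]!k = s then ksign (u[j := \<not> s]) k * c k * v (u[j := \<not> s, k := \<not> s]) else 0))"
        using len by (simp add: fermion_op_apply sum_distrib_left)
      also have "\<dots> = (\<Sum>k<n. a j k)"
        using uj j len unfolding a_def by (intro sum.cong refl) (auto simp: nth_list_update mult_ac)
      finally show ?thesis using uj by (subst if_P)
    qed (simp add: a_def)
    have "fermion_op s n c (fermion_op s n c v) u = (\<Sum>j<n. \<Sum>k<n. a j k)"
      unfolding fermion_op_apply[OF len] using inner by (intro sum.cong) auto
    also have "\<dots> = 0"
      unfolding a_def using len by (intro double_sum_antisym fermion_op_square_term_antisym) auto
    finally show ?thesis .
  qed
qed

lemma fermion_op_anticommute:
  "fermion_op s n x (fermion_op s n y v) = (\<lambda>u. - fermion_op s n y (fermion_op s n x v) u)"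
proof -
  have "fermion_op s n (\<lambda>j. x j + y j) (fermion_op s n (\<lambda>j. x j + y j) v) = (\<lambda>u. 0)"
    by (rule fermion_op_square)
  hence "(\<lambda>u. fermion_op s n x (fermion_op s n y v) u + fermion_op s n y (fermion_op s n x v) u) = (\<lambda>u. 0)"
    by (simp add: fermion_op_add_coeff fermion_op_add fermion_op_square)
  thus ?thesis by (auto simp: fun_eq_iff add_eq_0_iff)
qed

lemma contract_wedge_term:
  assumes j: "j < length u" and k: "k < length u"
  shows "(if u!j then 0 else ksign u j * b j *
            (if u[j:=True]!k then ksign (u[j:=True]) k * x k * v (u[j:=True, k:=False]) else 0)) +
         (if u!k then ksign u k * x k *
            (if u[k:=False]!j then 0 else ksign (u[k:=False]) j * b j * v (u[k:=False, j:=True])) else 0) =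
         (if j = k then b j * x j * v u else 0)"
proof (cases "j = k")
  case True
  show ?thesis using True j
    by (cases "u!j") (simp_all add: ksign_update_ge ksign_sq ksign_sq_left mult_ac list_update_eq_self)
next
  case False
  show ?thesis
  proof (cases "\<not> u!j \<and> u!k")
    case c: True
    have s: "ksign u j * ksign (u[j:=True]) k = - (ksign u k * ksign (u[k:=False]) j)"
      by (rule ksign_swap) (use c j k False in auto)
    have w: "u[j:=True, k:=False] = u[k:=False, j:=True]"
      by (rule list_update_swap) (use False in auto)
    have 1: "(if u!j then 0 else ksign u j * b j *
            (if u[j:=True]!k then ksign (u[j:=True]) k * x k * v (u[j:=True, k:=False]) else 0)) =
        (ksign u j * ksign (u[j:=True]) k) * (b j * x k * v (u[k:=False, j:=True]))"
      unfolding w using c False k by (simp add: mult_ac nth_list_update)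
    have 2: "(if u!k then ksign u k * x k *
            (if u[k:=False]!j then 0 else ksign (u[k:=False]) j * b j * v (u[k:=False, j:=True])) else 0) =
        (ksign u k * ksign (u[k:=False]) j) * (b j * x k * v (u[k:=False, j:=True]))"
      using c False j by (simp add: mult_ac nth_list_update)
    show ?thesis unfolding 1 2 s using False by simp
  next
    case c: False
    thus ?thesis using False j k by (auto simp: nth_list_update)
  qed
qed

lemma contract_wedge:
  assumes v: "v \<in> Vn n"
  shows "contract n b (wedge n x v) = (\<lambda>u. (\<Sum>i<n. b i * x i) * v u - wedge n x (contract n b v) u)"
proof
  fix u show "contract n b (wedge n x v) u = (\<Sum>i<n. b i * x i) * v u - wedge n x (contract n b v) u"
  proof (cases "length u = n")
    case False thus ?thesis using v by (simp add: fermion_op_apply_bad_length Vn_def)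
  next
    case len: True
    have L: "contract n b (wedge n x v) u = (\<Sum>j<n. \<Sum>k<n.
        if u!j then 0 else ksign u j * b j *
          (if u[j:=True]!k then ksign (u[j:=True]) k * x k * v (u[j:=True, k:=False]) else 0))"
      unfolding contract_apply[OF len] using len
      by (intro sum.cong refl) (simp add: wedge_apply sum_distrib_left)
    have "wedge n x (contract n b v) u = (\<Sum>k<n. \<Sum>j<n.
        if u!k then ksign u k * x k *
          (if u[k:=False]!j then 0 else ksign (u[k:=False]) j * b j * v (u[k:=False, j:=True])) else 0)"
      unfolding wedge_apply[OF len] using len
      by (intro sum.cong refl) (simp add: contract_apply sum_distrib_left)
    also have "\<dots> = (\<Sum>j<n. \<Sum>k<n.
        if u!k then ksign u k * x k *
          (if u[k:=False]!j then 0 else ksign (u[k:=False]) j * b j * v (u[k:=False, j:=True])) else 0)"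
      by (rule sum.swap)
    finally have R: "wedge n x (contract n b v) u = \<dots>" .
    have "contract n b (wedge n x v) u + wedge n x (contract n b v) u =
        (\<Sum>j<n. \<Sum>k<n. if j = k then b j * x j * v u else 0)"
      unfolding L R sum.distrib[symmetric] using len by (intro sum.cong refl contract_wedge_term) auto
    also have "\<dots> = (\<Sum>i<n. b i * x i) * v u"
      by (simp add: sum_distrib_right)
    finally show ?thesis by (simp add: algebra_simps)
  qed
qed

section \<open>Operators determined by their commutation with creation operators\<close>

definition lin_op :: "(vec \<Rightarrow> vec) \<Rightarrow> bool" where
  "lin_op A \<longleftrightarrow> (\<forall>v1 v2. A (\<lambda>u. v1 u + v2 u) = (\<lambda>u. A v1 u + A v2 u)) \<and>
                 (\<forall>c v. A (\<lambda>u. c * v u) = (\<lambda>u. c * A v u))"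

lemma lin_op_add: "lin_op A \<Longrightarrow> A (\<lambda>u. v1 u + v2 u) = (\<lambda>u. A v1 u + A v2 u)"
  unfolding lin_op_def by blast

lemma lin_op_smult: "lin_op A \<Longrightarrow> A (\<lambda>u. c * v u) = (\<lambda>u. c * A v u)"
  unfolding lin_op_def by blast

lemma lin_op_zero: "lin_op A \<Longrightarrow> A (\<lambda>u. 0) = (\<lambda>u. 0)"
  using lin_op_smult[of A 0 "\<lambda>u. 0"] by simp

lemma lin_op_sum:
  "finite S \<Longrightarrow> lin_op A \<Longrightarrow> A (\<lambda>u. \<Sum>w\<in>S. c w * f w u) = (\<lambda>u. \<Sum>w\<in>S. c w * A (f w) u)"
proof (induction S rule: finite_induct)
  case empty thus ?case by (simp add: lin_op_zero)
next
  case (insert x S)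
  have "A (\<lambda>u. \<Sum>w\<in>insert x S. c w * f w u) = A (\<lambda>u. c x * f x u + (\<Sum>w\<in>S. c w * f w u))"
    using insert.hyps by simp
  also have "\<dots> = (\<lambda>u. c x * A (f x) u + (\<Sum>w\<in>S. c w * A (f w) u))"
    using lin_op_add[OF insert.prems, of "\<lambda>u. c x * f x u" "\<lambda>u. \<Sum>w\<in>S. c w * f w u"]
      insert.IH[OF insert.prems] lin_op_smult[OF insert.prems] by simp
  finally show ?case using insert.hyps by simp
qed

lemma lin_op_comp: "lin_op A \<Longrightarrow> lin_op B \<Longrightarrow> lin_op (A \<circ> B)"
  by (simp add: lin_op_def)

lemma lin_op_id: "lin_op id"
  by (simp add: lin_op_def)

lemma lin_op_fold:
  "(\<And>t acc. t \<in> set ts \<Longrightarrow> lin_op acc \<Longrightarrow> lin_op (f t acc)) \<Longrightarrow> lin_op A \<Longrightarrow> lin_op (fold f ts A)"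
  by (induction ts arbitrary: A) auto

lemma lin_op_funpow: "lin_op A \<Longrightarrow> lin_op (A ^^ m)"
  by (induction m) (auto simp: lin_op_def)

definition intertwines :: "nat \<Rightarrow> (vec \<Rightarrow> vec) \<Rightarrow> ((nat \<Rightarrow> K) \<Rightarrow> (nat \<Rightarrow> K)) \<Rightarrow> bool" where
  "intertwines n A g \<longleftrightarrow> (\<forall>v\<in>Vn n. A v \<in> Vn n) \<and>
     (\<forall>x. \<forall>v\<in>Vn n. A (wedge n x v) = wedge n (g x) (A v))"

lemma intertwines_cong: "(\<And>v. v \<in> Vn n \<Longrightarrow> A v = B v) \<Longrightarrow> intertwines n A g = intertwines n B g"
  unfolding intertwines_def by (simp add: fermion_op_Vn)

lemma intertwines_id: "intertwines n id id"
  by (simp add: intertwines_def)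

lemma intertwines_comp: "intertwines n A g \<Longrightarrow> intertwines n B h \<Longrightarrow> intertwines n (A \<circ> B) (g \<circ> h)"
  by (simp add: intertwines_def)

lemma intertwines_fold:
  "(\<And>t A g. t \<in> set ts \<Longrightarrow> intertwines n A g \<Longrightarrow> intertwines n (f t A) (h t g)) \<Longrightarrow>
   intertwines n A g \<Longrightarrow> intertwines n (fold f ts A) (fold h ts g)"
  by (induction ts arbitrary: A g) auto

lemma intertwines_funpow: "intertwines n A g \<Longrightarrow> intertwines n (A ^^ m) (g ^^ m)"
  by (induction m) (simp_all add: intertwines_id[unfolded id_def] intertwines_comp[unfolded comp_def] intertwines_def)

lemma intertwines_one_plus_wedge_contract:
  "intertwines n (\<lambda>v u. lam * (v u + wedge n a (contract n b v) u)) (\<lambda>x j. x j + (\<Sum>i<n. b i * x i) * a j)"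
  unfolding intertwines_def
proof (intro conjI ballI allI)
  fix v assume "v \<in> Vn n"
  thus "(\<lambda>u. lam * (v u + wedge n a (contract n b v) u)) \<in> Vn n" by (simp add: Vn_def fermion_op_def)
next
  fix x v assume v: "v \<in> Vn n"
  define \<beta> where "\<beta> = (\<Sum>i<n. b i * x i)"
  have "wedge n a (contract n b (wedge n x v)) =
      (\<lambda>u. \<beta> * wedge n a v u - wedge n a (wedge n x (contract n b v)) u)"
    unfolding contract_wedge[OF v] \<beta>_def[symmetric] by (simp add: fermion_op_diff fermion_op_smult)
  hence lhs: "(\<lambda>u. lam * (wedge n x v u + wedge n a (contract n b (wedge n x v)) u)) =
      (\<lambda>u. lam * (wedge n x v u + \<beta> * wedge n a v u - wedge n a (wedge n x (contract n b v)) u))"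
    by (simp add: algebra_simps)
  have "wedge n (\<lambda>j. x j + \<beta> * a j) (\<lambda>u. lam * (v u + wedge n a (contract n b v) u)) =
      (\<lambda>u. lam * (wedge n x v u + wedge n x (wedge n a (contract n b v)) u) +
           \<beta> * (lam * (wedge n a v u + wedge n a (wedge n a (contract n b v)) u)))"
    by (simp add: fermion_op_add_coeff fermion_op_smult_coeff fermion_op_add fermion_op_smult)
  also have "\<dots> = (\<lambda>u. lam * (wedge n x v u + \<beta> * wedge n a v u - wedge n a (wedge n x (contract n b v)) u))"
    by (simp add: fermion_op_square fermion_op_anticommute[of True n x a] algebra_simps)
  finally show "(\<lambda>u. lam * (wedge n x v u + wedge n a (contract n b (wedge n x v)) u)) =
      wedge n (\<lambda>j. x j + (\<Sum>i<n. b i * x i) * a j) (\<lambda>u. lam * (v u + wedge n a (contract n b v) u))"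
    unfolding lhs \<beta>_def by simp
qed

definition vacuum :: "nat \<Rightarrow> vec" where
  "vacuum n = (\<lambda>u. if u = replicate n False then 1 else 0)"

definition unit_vec :: "bool list \<Rightarrow> vec" where
  "unit_vec w = (\<lambda>u. if u = w then 1 else 0)"

lemma unit_vec_Vn: "length w = n \<Longrightarrow> unit_vec w \<in> Vn n"
  by (auto simp: Vn_def unit_vec_def)

lemma finite_basis: "finite (basis n)"
  using finite_lists_length_eq[of "UNIV :: bool set" n] by (simp add: basis_def)

lemma unit_vec_expansion: "v \<in> Vn n \<Longrightarrow> v = (\<lambda>u. \<Sum>w\<in>basis n. v w * unit_vec w u)"
proof
  fix u assume v: "v \<in> Vn n"
  have "(\<Sum>w\<in>basis n. v w * unit_vec w u) = (\<Sum>w\<in>basis n. if u = w then v u else 0)"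
    by (intro sum.cong refl) (simp add: unit_vec_def)
  also have "\<dots> = (if u \<in> basis n then v u else 0)" by (simp add: finite_basis)
  also have "\<dots> = v u" using v by (auto simp: basis_def Vn_def)
  finally show "v u = (\<Sum>w\<in>basis n. v w * unit_vec w u)" by simp
qed

lemma wedge_unit_vec:
  assumes w: "length w = n" "i < n" "w!i" "\<forall>l<i. \<not> w!l"
  shows "wedge n (\<lambda>j. if j = i then 1 else 0) (unit_vec (w[i:=False])) = unit_vec w"
proof
  fix u show "wedge n (\<lambda>j. if j = i then 1 else 0) (unit_vec (w[i:=False])) u = unit_vec w u"
  proof (cases "length u = n")
    case False thus ?thesis using w by (auto simp: fermion_op_apply_bad_length unit_vec_def)
  next
    case True
    have "wedge n (\<lambda>j. if j = i then 1 else 0) (unit_vec (w[i:=False])) u =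
        (if u!i then ksign u i * unit_vec (w[i:=False]) (u[i:=False]) else 0)"
    proof -
      have "wedge n (\<lambda>j. if j = i then 1 else 0) (unit_vec (w[i:=False])) u =
          (\<Sum>j<n. if j = i then (if u!i then ksign u i * unit_vec (w[i:=False]) (u[i:=False]) else 0) else 0)"
        unfolding wedge_apply[OF True] by (intro sum.cong refl) auto
      thus ?thesis using w by simp
    qed
    also have "\<dots> = unit_vec w u"
    proof (cases "u = w")
      case True
      have "ones_before w i = 0" unfolding ones_before_def using w by auto
      thus ?thesis using True w by (simp add: unit_vec_def ksign_def)
    next
      case False
      have "\<not> (u!i \<and> u[i:=False] = w[i:=False])"
      proof
        assume h: "u!i \<and> u[i:=False] = w[i:=False]"
        hence "u[i:=False, i:=True] = w[i:=False, i:=True]" by simp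
        thus False using False h w(3) by (metis list_update_id list_update_overwrite)
      qed
      thus ?thesis using False by (auto simp: unit_vec_def)
    qed
    finally show ?thesis .
  qed
qed

text \<open>Every basis vector arises from the vacuum by creation operators, so an operator is
  determined by its value on the vacuum and by how it intertwines creation operators.\<close>

lemma intertwiners_eq_unit_vec:
  assumes A: "intertwines n A g" and B: "intertwines n B h" and gh: "\<And>x j. j < n \<Longrightarrow> g x j = h x j"
    and vac: "A (vacuum n) = B (vacuum n)"
  shows "length w = n \<Longrightarrow> A (unit_vec w) = B (unit_vec w)"
proof (induction "ones_before w n" arbitrary: w)
  case 0
  hence "{i. i < n \<and> w!i} = {}" by (simp add: ones_before_def)
  hence "w = replicate n False" using 0 by (intro nth_equalityI) auto
  hence "unit_vec w = vacuum n" by (simp add: unit_vec_def vacuum_def)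
  thus ?case using vac by simp
next
  case (Suc m)
  obtain i0 where "i0 < n" "w!i0"
    using Suc(2) unfolding ones_before_def by (metis (mono_tags) Collect_empty_eq card.empty nat.distinct(1))
  define i where "i = (LEAST i. w!i)"
  have wi: "w!i" unfolding i_def by (rule LeastI) (rule \<open>w!i0\<close>)
  have il: "i < n" using \<open>i0 < n\<close> Least_le[of "\<lambda>i. w!i" i0] \<open>w!i0\<close> unfolding i_def by simp
  have ib: "\<forall>l<i. \<not> w!l" unfolding i_def using not_less_Least by blast
  define w' where "w' = w[i:=False]"
  have lw': "length w' = n" using Suc(3) by (simp add: w'_def)
  have "m = ones_before w' n"
    using ones_before_clear[OF il _ wi] Suc(2,3) il unfolding w'_def by simp
  hence IH: "A (unit_vec w') = B (unit_vec w')" by (rule Suc(1)[OF _ lw'])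
  let ?d = "\<lambda>j. if j = i then 1 else (0::K)"
  have w: "unit_vec w = wedge n ?d (unit_vec w')"
    unfolding w'_def by (rule wedge_unit_vec[symmetric]) (use Suc(3) il wi ib in auto)
  have "A (unit_vec w) = wedge n (g ?d) (A (unit_vec w'))"
    unfolding w using A unit_vec_Vn[OF lw'] by (simp add: intertwines_def)
  also have "\<dots> = wedge n (h ?d) (B (unit_vec w'))" unfolding IH by (rule fermion_op_cong) (rule gh)
  also have "\<dots> = B (unit_vec w)"
    unfolding w using B unit_vec_Vn[OF lw'] by (simp add: intertwines_def)
  finally show ?case .
qed

lemma intertwiners_eq:
  assumes "lin_op A" "lin_op B" "intertwines n A g" "intertwines n B h" "\<And>x j. j < n \<Longrightarrow> g x j = h x j"
    "A (vacuum n) = B (vacuum n)" "v \<in> Vn n"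
  shows "A v = B v"
proof -
  have b: "\<And>w. w \<in> basis n \<Longrightarrow> A (unit_vec w) = B (unit_vec w)"
    using intertwiners_eq_unit_vec[OF assms(3-6)] by (simp add: basis_def)
  have "A v = A (\<lambda>u. \<Sum>w\<in>basis n. v w * unit_vec w u)" using unit_vec_expansion[OF assms(7)] by simp
  also have "\<dots> = (\<lambda>u. \<Sum>w\<in>basis n. v w * A (unit_vec w) u)" by (rule lin_op_sum[OF finite_basis assms(1)])
  also have "\<dots> = (\<lambda>u. \<Sum>w\<in>basis n. v w * B (unit_vec w) u)" using b by simp
  also have "\<dots> = B (\<lambda>u. \<Sum>w\<in>basis n. v w * unit_vec w u)" by (rule lin_op_sum[OF finite_basis assms(2), symmetric])
  also have "\<dots> = B v" using unit_vec_expansion[OF assms(7)] by simp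
  finally show ?thesis .
qed

section \<open>The braid generators\<close>

lemma list_update2_eq_iff:
  "a < length u \<Longrightarrow> b < length u \<Longrightarrow> a \<noteq> b \<Longrightarrow> (u[a:=x, b:=y] = u[a:=x', b:=y']) = (x = x' \<and> y = y')"
  by (metis nth_list_update_eq nth_list_update_neq length_list_update)

lemma sum_basis_two_positions:
  assumes u: "length u = n" and ab: "a < n" "b < n" "a \<noteq> b"
  shows "(\<Sum>w\<in>basis n. (if (\<forall>j<n. j \<noteq> a \<and> j \<noteq> b \<longrightarrow> u!j = w!j) then g w else 0)) =
     g (u[a:=False,b:=False]) + g (u[a:=False,b:=True]) + g (u[a:=True,b:=False]) + (g (u[a:=True,b:=True]) :: K)"
proof -
  let ?P = "\<lambda>w. (\<forall>j<n. j \<noteq> a \<and> j \<noteq> b \<longrightarrow> u!j = w!j)"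
  let ?W = "{u[a:=False,b:=False], u[a:=False,b:=True], u[a:=True,b:=False], u[a:=True,b:=True]}"
  have "(\<Sum>w\<in>basis n. (if ?P w then g w else 0)) = (\<Sum>w\<in>{w\<in>basis n. ?P w}. g w)"
    by (rule sum.inter_filter[symmetric]) (rule finite_basis)
  also have "{w\<in>basis n. ?P w} = ?W"
  proof (intro equalityI subsetI)
    fix w assume w: "w \<in> {w\<in>basis n. ?P w}"
    have "w = u[a:=w!a, b:=w!b]"
      by (rule nth_equalityI) (use w u ab in \<open>auto simp: basis_def nth_list_update\<close>)
    thus "w \<in> ?W" by (cases "w!a"; cases "w!b") auto
  next
    fix w assume "w \<in> ?W"
    thus "w \<in> {w\<in>basis n. ?P w}" using u ab by (auto simp: basis_def nth_list_update)
  qed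
  also have "(\<Sum>w\<in>?W. g w) =
     g (u[a:=False,b:=False]) + g (u[a:=False,b:=True]) + g (u[a:=True,b:=False]) + g (u[a:=True,b:=True])"
    using u ab by (simp add: list_update2_eq_iff)
  finally show ?thesis .
qed

lemma Phi_sigma_apply:
  assumes "length u = n" "Suc a < n"
  shows "Phi_sigma n (Suc a) v u =
       Rmat (u!a, u!Suc a) (False, False) * v (u[a:=False, Suc a:=False]) +
       Rmat (u!a, u!Suc a) (False, True) * v (u[a:=False, Suc a:=True]) +
       Rmat (u!a, u!Suc a) (True, False) * v (u[a:=True, Suc a:=False]) +
       Rmat (u!a, u!Suc a) (True, True) * v (u[a:=True, Suc a:=True])" (is "_ = ?rhs")
proof -
  have "Phi_sigma n (Suc a) v u = (\<Sum>w\<in>basis n. (if (\<forall>j<n. j \<noteq> a \<and> j \<noteq> Suc a \<longrightarrow> u!j = w!j)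
      then Rmat (u!a, u!Suc a) (w!a, w!Suc a) * v w else 0))"
    unfolding Phi_sigma_def using assms(1) by (simp add: if_distrib[of "\<lambda>c. c * _"] cong: if_cong)
  also have "\<dots> = ?rhs" by (subst sum_basis_two_positions) (use assms in \<open>simp_all add: nth_list_update\<close>)
  finally show ?thesis .
qed

definition sigma_coeff :: "nat \<Rightarrow> nat \<Rightarrow> K" where
  "sigma_coeff t j = (if j = t - 1 then 1 else if j = t then - inverse qq else 0)"

lemma Phi_sigma_eq_wedge_contract:
  assumes t: "1 \<le> t" "t < n" and v: "v \<in> Vn n"
  shows "Phi_sigma n t v = (\<lambda>u. qq * (v u + wedge n (\<lambda>j. - sigma_coeff t j) (contract n (sigma_coeff t) v) u))"
proof
  fix u
  obtain a where a: "t = Suc a" using t by (cases t) auto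
  let ?r = "sigma_coeff (Suc a)"
  have "Phi_sigma n (Suc a) v u = qq * (v u + wedge n (\<lambda>j. - ?r j) (contract n ?r v) u)"
  proof (cases "length u = n")
    case False thus ?thesis using v by (simp add: Phi_sigma_def fermion_op_apply_bad_length Vn_def)
  next
    case len: True
    have an: "a < n" "Suc a < n" "a \<noteq> Suc a" "a < length u" "Suc a < length u" using t a len by auto
    have coeff: "?r a = 1" "?r (Suc a) = - inverse qq" "\<And>j. j \<noteq> a \<Longrightarrow> j \<noteq> Suc a \<Longrightarrow> ?r j = 0"
      by (auto simp: sigma_coeff_def)
    have ctr: "contract n ?r v u' =
        (if u'!a = False then ksign u' a * ?r a * v (u'[a := \<not> False]) else 0) +
        (if u'!Suc a = False then ksign u' (Suc a) * ?r (Suc a) * v (u'[Suc a := \<not> False]) else 0)"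
      if "length u' = n" for u'
      by (rule fermion_op_two_nonzero_coeffs) (use that an coeff in auto)
    have wdg: "wedge n (\<lambda>j. - ?r j) y u =
        (if u!a = True then ksign u a * - ?r a * y (u[a := \<not> True]) else 0) +
        (if u!Suc a = True then ksign u (Suc a) * - ?r (Suc a) * y (u[Suc a := \<not> True]) else 0)" for y
      by (rule fermion_op_two_nonzero_coeffs) (use len an coeff in auto)
    have swap: "xs[Suc a := y, a := x] = xs[a:=x, Suc a:=y]" for xs :: "bool list" and x y
      by (rule list_update_swap) simp
    note simps = Phi_sigma_apply[OF len an(2)] wdg ctr coeff len an ksign_update_ge ksign_update_lt ksign_Suc
      ksign_sq ksign_sq_left nth_list_update list_update_overwrite list_update_eq_self swap Rmat_def
    show ?thesis
      by (cases "u!a"; cases "u!Suc a") (simp_all add: simps field_simps qq_neq_0)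
  qed
  thus "Phi_sigma n t v u = qq * (v u + wedge n (\<lambda>j. - sigma_coeff t j) (contract n (sigma_coeff t) v) u)"
    unfolding a .
qed

definition sigma_map :: "nat \<Rightarrow> nat \<Rightarrow> (nat \<Rightarrow> K) \<Rightarrow> (nat \<Rightarrow> K)" where
  "sigma_map n t x = (\<lambda>j. x j + (\<Sum>i<n. sigma_coeff t i * x i) * (- sigma_coeff t j))"

lemma intertwines_Phi_sigma:
  assumes "1 \<le> t" "t < n"
  shows "intertwines n (Phi_sigma n t) (sigma_map n t)"
proof -
  have "intertwines n (\<lambda>v u. qq * (v u + wedge n (\<lambda>j. - sigma_coeff t j) (contract n (sigma_coeff t) v) u))
      (sigma_map n t)"
    using intertwines_one_plus_wedge_contract[of n qq "\<lambda>j. - sigma_coeff t j" "sigma_coeff t"]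
    unfolding sigma_map_def by simp
  thus ?thesis using intertwines_cong[OF Phi_sigma_eq_wedge_contract[OF assms]] by simp
qed

lemma lin_op_Phi_sigma: "lin_op (Phi_sigma n t)"
  unfolding lin_op_def Phi_sigma_def fun_eq_iff by (simp add: sum.distrib sum_distrib_left algebra_simps)

definition cycle_map :: "nat \<Rightarrow> (nat \<Rightarrow> K) \<Rightarrow> (nat \<Rightarrow> K)" where
  "cycle_map n = fold (\<lambda>t g. sigma_map n t \<circ> g) [1..<n] id"

lemma intertwines_Phi_tau: "intertwines n (Phi_tau n) (cycle_map n ^^ n)"
proof -
  have "intertwines n (Phi_cyc n) (cycle_map n)"
    unfolding Phi_cyc_def cycle_map_def
    by (rule intertwines_fold[OF _ intertwines_id]) (auto intro!: intertwines_comp intertwines_Phi_sigma)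
  thus ?thesis unfolding Phi_tau_def by (rule intertwines_funpow)
qed

lemma lin_op_Phi_tau: "lin_op (Phi_tau n)"
proof -
  have "lin_op (Phi_cyc n)"
    unfolding Phi_cyc_def by (rule lin_op_fold) (auto intro: lin_op_comp lin_op_Phi_sigma lin_op_id)
  thus ?thesis unfolding Phi_tau_def by (rule lin_op_funpow)
qed

lemma vacuum_Vn: "(\<lambda>u. c * vacuum n u) \<in> Vn n"
  by (auto simp: Vn_def vacuum_def)

lemma contract_vacuum: "contract n b (\<lambda>u. c * vacuum n u) = (\<lambda>u. 0)"
proof
  fix u show "contract n b (\<lambda>u. c * vacuum n u) u = 0"
  proof (cases "length u = n")
    case False thus ?thesis by (simp add: fermion_op_apply_bad_length)
  next
    case True
    have "u[j:=True] \<noteq> replicate n False" if "j < n" for j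
      using True that by (metis nth_list_update_eq nth_replicate)
    thus ?thesis unfolding contract_apply[OF True] vacuum_def by (intro sum.neutral ballI) auto
  qed
qed

lemma Phi_sigma_vacuum:
  "1 \<le> t \<Longrightarrow> t < n \<Longrightarrow> Phi_sigma n t (\<lambda>u. c * vacuum n u) = (\<lambda>u. qq * c * vacuum n u)"
  by (simp add: Phi_sigma_eq_wedge_contract vacuum_Vn contract_vacuum fermion_op_zero mult.assoc)

lemma fold_Phi_sigma_vacuum:
  "set ts \<subseteq> {1..<n} \<Longrightarrow>
   fold (\<lambda>t A. Phi_sigma n t \<circ> A) ts id (\<lambda>u. c * vacuum n u) = (\<lambda>u. (qq ^ length ts * c) * vacuum n u)"
proof (induction ts rule: rev_induct)
  case (snoc t ts)
  hence "1 \<le> t" "t < n" by auto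
  with snoc show ?case by (simp add: Phi_sigma_vacuum) (simp add: mult.assoc)
qed simp

lemma Phi_tau_vacuum: "Phi_tau n (vacuum n) = (\<lambda>u. qq ^ (n * (n - 1)) * vacuum n u)"
proof -
  have "(Phi_cyc n ^^ m) (\<lambda>u. c * vacuum n u) = (\<lambda>u. qq ^ ((n - 1) * m) * c * vacuum n u)" for m c
  proof (induction m arbitrary: c)
    case (Suc m)
    have "(Phi_cyc n ^^ Suc m) (\<lambda>u. c * vacuum n u) = Phi_cyc n (\<lambda>u. (qq ^ ((n - 1) * m) * c) * vacuum n u)"
      using Suc by simp
    also have "\<dots> = (\<lambda>u. qq ^ (n - 1) * (qq ^ ((n - 1) * m) * c) * vacuum n u)"
      unfolding Phi_cyc_def by (subst fold_Phi_sigma_vacuum) auto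
    finally show ?case by (simp add: power_add mult_ac)
  qed simp
  from this[of n 1] show ?thesis by (simp add: Phi_tau_def mult.commute)
qed

section \<open>The closed form of \<open>\<Phi>(\<tau>)\<close>\<close>

definition num_odd :: "bool list \<Rightarrow> nat" where
  "num_odd u = ones_before u (length u)"

lemma num_odd_update:
  assumes "j < length u"
  shows "num_odd (u[j:=x]) + (if u!j then 1 else 0) = num_odd u + (if x then 1 else 0)"
proof -
  have e: "{i. i < length u \<and> i \<noteq> j \<and> u[j:=x] ! i} = {i. i < length u \<and> i \<noteq> j \<and> u ! i}"
    by (intro Collect_cong) (metis nth_list_update_neq)
  have "num_odd (u[j:=x]) = card {i. i < length u \<and> i \<noteq> j \<and> u ! i} + (if x then 1 else 0)"
    using ones_before_split[OF assms, of "u[j:=x]"] e assms unfolding num_odd_def by simp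
  moreover have "num_odd u = card {i. i < length u \<and> i \<noteq> j \<and> u ! i} + (if u!j then 1 else 0)"
    using ones_before_split[OF assms, of u] unfolding num_odd_def by simp
  ultimately show ?thesis by simp
qed

lemma num_odd_le_length: "num_odd u \<le> length u"
proof -
  have "num_odd u \<le> card {i. i < length u}" unfolding num_odd_def ones_before_def by (rule card_mono) auto
  thus ?thesis by simp
qed

text \<open>\<open>E_coeff\<close> and \<open>F_coeff\<close> are the coefficients of \<open>E\<close> and \<open>F\<close> read as annihilation
  and creation operators (the factors \<open>K\<^sup>\<plusminus>\<^sup>1\<close> of the coproduct contribute the powers of \<open>q\<close>);
  \<open>tau_normal n\<close> acts on the part with \<open>k\<close> odd factors by \<open>q\<^sup>n\<^sup>(\<^sup>n\<^sup>-\<^sup>1\<^sup>)\<^sup>-\<^sup>2\<^sup>n\<^sup>k (1 + \<mu> F E)\<close>.\<close>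

definition E_coeff :: "nat \<Rightarrow> nat \<Rightarrow> K" where
  "E_coeff n j = qq powi (int j - int n + 1)"

definition F_coeff :: "nat \<Rightarrow> K" where
  "F_coeff j = qq ^ j"

definition tau_mu :: "nat \<Rightarrow> K" where
  "tau_mu n = qq ^ n * (qq - inverse qq)"

definition weight_twist :: "nat \<Rightarrow> vec \<Rightarrow> vec" where
  "weight_twist n v = (\<lambda>u. qq ^ (n * (n - 1)) * qq powi (- (2 * int n * int (num_odd u))) * v u)"

definition one_plus_FE :: "nat \<Rightarrow> vec \<Rightarrow> vec" where
  "one_plus_FE n v = (\<lambda>u. v u + wedge n (\<lambda>j. tau_mu n * F_coeff j) (contract n (E_coeff n) v) u)"

definition tau_normal :: "nat \<Rightarrow> vec \<Rightarrow> vec" where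
  "tau_normal n = weight_twist n \<circ> one_plus_FE n"

definition tau_normal_map :: "nat \<Rightarrow> (nat \<Rightarrow> K) \<Rightarrow> (nat \<Rightarrow> K)" where
  "tau_normal_map n x =
     (\<lambda>j. qq powi (- (2 * int n)) * (x j + (\<Sum>i<n. E_coeff n i * x i) * (tau_mu n * F_coeff j)))"

lemma E_coeff_eq: "1 \<le> n \<Longrightarrow> E_coeff n i = qq ^ i * inverse qq ^ (n - 1)"
proof -
  assume "1 \<le> n"
  hence e: "int i - int n + 1 = int i + - int (n - 1)" by simp
  have "qq powi (- int (n - 1)) = inverse qq ^ (n - 1)" by (simp add: power_int_minus power_inverse)
  thus ?thesis unfolding E_coeff_def e qq_powi_add[symmetric] by simp
qed

lemma weight_twist_step:
  assumes "j < length u" "u!j"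
  shows "qq powi (- (2 * int n)) * qq powi (- (2 * int n * int (num_odd (u[j:=False])))) = qq powi (- (2 * int n * int (num_odd u)))"
proof -
  have "num_odd (u[j:=False]) + 1 = num_odd u" using num_odd_update[OF assms(1), of False] assms(2) by simp
  hence e: "int (num_odd u) = int (num_odd (u[j:=False])) + 1" by linarith
  have "qq powi (- (2 * int n)) * qq powi (- (2 * int n * int (num_odd (u[j:=False])))) =
    qq powi (- (2 * int n) + - (2 * int n * int (num_odd (u[j:=False]))))" by (rule qq_powi_add)
  also have "- (2 * int n) + - (2 * int n * int (num_odd (u[j:=False]))) = - (2 * int n * int (num_odd u))"
    unfolding e by (simp add: algebra_simps)
  finally show ?thesis .
qed

lemma intertwines_weight_twist: "intertwines n (weight_twist n) (\<lambda>x j. qq powi (- (2 * int n)) * x j)"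
  unfolding intertwines_def
proof (intro conjI ballI allI)
  fix v assume "v \<in> Vn n" thus "weight_twist n v \<in> Vn n" by (simp add: Vn_def weight_twist_def)
next
  fix x v assume v: "v \<in> Vn n"
  show "weight_twist n (wedge n x v) = wedge n (\<lambda>j. qq powi (- (2 * int n)) * x j) (weight_twist n v)"
  proof
    fix u show "weight_twist n (wedge n x v) u = wedge n (\<lambda>j. qq powi (- (2 * int n)) * x j) (weight_twist n v) u"
    proof (cases "length u = n")
      case False thus ?thesis by (simp add: weight_twist_def fermion_op_apply_bad_length)
    next
      case True
      have "weight_twist n (wedge n x v) u = (\<Sum>j<n. qq ^ (n * (n - 1)) * qq powi (- (2 * int n * int (num_odd u))) *
          (if u!j then ksign u j * x j * v (u[j:=False]) else 0))"
        by (simp add: weight_twist_def wedge_apply[OF True] sum_distrib_left)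
      also have "\<dots> = (\<Sum>j<n. if u!j then ksign u j * (qq powi (- (2 * int n)) * x j) * weight_twist n v (u[j:=False]) else 0)"
      proof (rule sum.cong[OF refl])
        fix j assume j: "j \<in> {..<n}"
        show "qq ^ (n * (n - 1)) * qq powi (- (2 * int n * int (num_odd u))) *
          (if u!j then ksign u j * x j * v (u[j:=False]) else 0) =
          (if u!j then ksign u j * (qq powi (- (2 * int n)) * x j) * weight_twist n v (u[j:=False]) else 0)"
        proof (cases "u!j")
          case c: True
          have "j < length u" using j True by simp
          from weight_twist_step[OF this c, of n] show ?thesis using c
            by (simp add: weight_twist_def mult_ac)
        qed simp
      qed
      also have "\<dots> = wedge n (\<lambda>j. qq powi (- (2 * int n)) * x j) (weight_twist n v) u"
        by (rule wedge_apply[OF True, symmetric])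
      finally show ?thesis .
    qed
  qed
qed

lemma intertwines_one_plus_FE: "intertwines n (one_plus_FE n) (\<lambda>x j. x j + (\<Sum>i<n. E_coeff n i * x i) * (tau_mu n * F_coeff j))"
  unfolding one_plus_FE_def using intertwines_one_plus_wedge_contract[of n 1 "\<lambda>j. tau_mu n * F_coeff j" "E_coeff n"] by simp

lemma intertwines_tau_normal: "intertwines n (tau_normal n) (tau_normal_map n)"
proof -
  have "intertwines n (weight_twist n \<circ> one_plus_FE n) ((\<lambda>x j. qq powi (- (2 * int n)) * x j) \<circ> (\<lambda>x j. x j + (\<Sum>i<n. E_coeff n i * x i) * (tau_mu n * F_coeff j)))"
    by (rule intertwines_comp[OF intertwines_weight_twist intertwines_one_plus_FE])
  thus ?thesis unfolding tau_normal_def tau_normal_map_def comp_def by simp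
qed

lemma lin_op_tau_normal: "lin_op (tau_normal n)"
proof -
  have "lin_op (weight_twist n)" unfolding lin_op_def weight_twist_def by (simp add: algebra_simps)
  moreover have "lin_op (one_plus_FE n)" unfolding lin_op_def one_plus_FE_def
    by (simp add: fermion_op_add fermion_op_smult algebra_simps)
  ultimately show ?thesis unfolding tau_normal_def by (rule lin_op_comp)
qed

lemma tau_normal_vacuum: "tau_normal n (vacuum n) = (\<lambda>u. qq ^ (n * (n - 1)) * vacuum n u)"
proof -
  have "contract n (E_coeff n) (vacuum n) = (\<lambda>u. 0)" using contract_vacuum[of n "E_coeff n" 1] by simp
  hence "one_plus_FE n (vacuum n) = vacuum n" by (simp add: one_plus_FE_def fermion_op_zero)
  moreover have "num_odd (replicate n False) = 0" by (simp add: num_odd_def ones_before_def)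
  ultimately show ?thesis by (auto simp: tau_normal_def weight_twist_def vacuum_def)
qed

text \<open>In the coordinates \<open>z\<^sub>j = q\<^sup>j x\<^sub>j\<close> each \<open>\<sigma>\<^sub>t\<close> only mixes \<open>z\<^sub>t\<^sub>-\<^sub>1, z\<^sub>t\<close>, and
  \<open>\<sigma>\<^sub>n\<^sub>-\<^sub>1 \<cdots> \<sigma>\<^sub>1\<close> becomes the rotation \<open>z\<^sub>i \<mapsto> q\<^sup>-\<^sup>2 z\<^sub>i\<^sub>+\<^sub>1\<close> corrected by a multiple of
  \<open>\<Sum> z\<close> in the last slot; \<open>\<Sum> z\<close> is invariant, so the \<open>n\<close>-th power is explicit.\<close>

definition qinv2 :: K where
  "qinv2 = inverse qq ^ 2"

definition rescale :: "(nat \<Rightarrow> K) \<Rightarrow> (nat \<Rightarrow> K)" where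
  "rescale x = (\<lambda>j. qq ^ j * x j)"

definition sigma_map_rescaled :: "nat \<Rightarrow> (nat \<Rightarrow> K) \<Rightarrow> (nat \<Rightarrow> K)" where
  "sigma_map_rescaled t z = (\<lambda>j. if j = t - 1 then qinv2 * z t else if j = t then z (t - 1) + (1 - qinv2) * z t else z j)"

lemma rescale_sigma_map:
  assumes t: "1 \<le> t" "t < n"
  shows "rescale (sigma_map n t x) = sigma_map_rescaled t (rescale x)"
proof
  fix j
  obtain a where a: "t = Suc a" using t by (cases t) auto
  have an: "a < n" "Suc a < n" using t a by auto
  have s: "(\<Sum>i<n. sigma_coeff t i * x i) = x a - inverse qq * x (Suc a)"
  proof -
    have "(\<Sum>i<n. sigma_coeff t i * x i) = sigma_coeff t a * x a + sigma_coeff t (Suc a) * x (Suc a)"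
      by (rule sum_two_nonzero) (use an a in \<open>auto simp: sigma_coeff_def\<close>)
    thus ?thesis using a by (simp add: sigma_coeff_def)
  qed
  have q1: "qq ^ a * inverse qq = qinv2 * (qq * qq ^ a)" by (simp add: qinv2_def field_simps qq_neq_0 power2_eq_square)
  have q2: "qq * qq ^ a * inverse qq = qq ^ a" by (simp add: field_simps qq_neq_0)
  show "rescale (sigma_map n t x) j = sigma_map_rescaled t (rescale x) j"
    unfolding rescale_def sigma_map_def sigma_map_rescaled_def s using a
    by (auto simp: sigma_coeff_def algebra_simps q1 q2 qinv2_def power2_eq_square qq_neq_0)
qed

definition cycle_map_rescaled :: "nat \<Rightarrow> (nat \<Rightarrow> K) \<Rightarrow> (nat \<Rightarrow> K)" where
  "cycle_map_rescaled n = fold (\<lambda>t g. sigma_map_rescaled t \<circ> g) [1..<n] id"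

lemma rescale_fold_sigma_map:
  "set ts \<subseteq> {1..<n} \<Longrightarrow>
   rescale (fold (\<lambda>t g. sigma_map n t \<circ> g) ts id x) = fold (\<lambda>t g. sigma_map_rescaled t \<circ> g) ts id (rescale x)"
proof (induction ts rule: rev_induct)
  case (snoc t ts)
  hence "1 \<le> t" "t < n" by auto
  with snoc show ?case by (simp add: rescale_sigma_map)
qed simp

lemma rescale_cycle_map: "rescale (cycle_map n x) = cycle_map_rescaled n (rescale x)"
  unfolding cycle_map_def cycle_map_rescaled_def by (rule rescale_fold_sigma_map) auto

lemma fold_sigma_map_rescaled:
  "fold (\<lambda>t g. sigma_map_rescaled t \<circ> g) [1..<Suc m] id z j =
    (if j < m then qinv2 * z (Suc j) else if j = m then z 0 + (1 - qinv2) * (\<Sum>i<m. z (Suc i)) else z j)"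
proof (induction m arbitrary: j)
  case 0 thus ?case by simp
next
  case (Suc m)
  define y where "y = fold (\<lambda>t g. sigma_map_rescaled t \<circ> g) [1..<Suc m] id z"
  have yj: "y j = (if j < m then qinv2 * z (Suc j) else if j = m then z 0 + (1 - qinv2) * (\<Sum>i<m. z (Suc i)) else z j)" for j
    unfolding y_def by (rule Suc.IH)
  have e: "fold (\<lambda>t g. sigma_map_rescaled t \<circ> g) [1..<Suc (Suc m)] id z = sigma_map_rescaled (Suc m) y"
    unfolding y_def by (simp del: upt_Suc add: upt_Suc_append)
  show ?case unfolding e by (auto simp: sigma_map_rescaled_def yj algebra_simps)
qed

definition rotate_map :: "nat \<Rightarrow> (nat \<Rightarrow> K) \<Rightarrow> (nat \<Rightarrow> K)" where
  "rotate_map n z = (\<lambda>i. qinv2 * z (Suc i mod n) + (1 - qinv2) * (\<Sum>j<n. z j) * (if i = n - 1 then 1 else 0))"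

lemma cycle_map_rescaled_eq_rotate_map:
  assumes "1 \<le> n" "i < n"
  shows "cycle_map_rescaled n z i = rotate_map n z i"
proof -
  obtain m where m: "n = Suc m" using assms by (cases n) auto
  have "cycle_map_rescaled n z i = (if i < m then qinv2 * z (Suc i) else if i = m then z 0 + (1 - qinv2) * (\<Sum>i<m. z (Suc i)) else z i)"
    unfolding cycle_map_rescaled_def m by (rule fold_sigma_map_rescaled)
  moreover have "(\<Sum>j<n. z j) = z 0 + (\<Sum>i<m. z (Suc i))" unfolding m by (rule sum.lessThan_Suc_shift)
  ultimately show ?thesis
  proof (cases "i < m")
    case True
    hence "Suc i mod n = Suc i" using m by simp
    thus ?thesis using True \<open>cycle_map_rescaled n z i = _\<close> by (simp add: rotate_map_def m)
  next
    case False
    hence im: "i = m" using assms m by simp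
    hence "Suc i mod n = 0" using m by simp
    thus ?thesis using im \<open>cycle_map_rescaled n z i = _\<close> \<open>(\<Sum>j<n. z j) = _\<close> m by (simp add: rotate_map_def algebra_simps)
  qed
qed

lemma rotate_map_cong: "(\<And>j. j < n \<Longrightarrow> z j = z' j) \<Longrightarrow> 1 \<le> n \<Longrightarrow> rotate_map n z i = rotate_map n z' i"
  unfolding rotate_map_def by simp

lemma sum_rotate:
  assumes "1 \<le> n"
  shows "(\<Sum>i<n. z (Suc i mod n)) = (\<Sum>i<n. z i :: K)"
proof -
  obtain m where m: "n = Suc m" using assms by (cases n) auto
  have "(\<Sum>i<Suc m. z (Suc i mod Suc m)) = (\<Sum>i<m. z (Suc i mod Suc m)) + z (Suc m mod Suc m)"
    by (rule sum.lessThan_Suc)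
  also have "(\<Sum>i<m. z (Suc i mod Suc m)) = (\<Sum>i<m. z (Suc i))" by (intro sum.cong) auto
  also have "(\<Sum>i<m. z (Suc i)) + z (Suc m mod Suc m) = (\<Sum>i<Suc m. z i)"
    by (subst sum.lessThan_Suc_shift) (simp add: add.commute)
  finally show ?thesis using m by simp
qed

lemma sum_rotate_map:
  assumes "1 \<le> n"
  shows "(\<Sum>i<n. rotate_map n z i) = (\<Sum>i<n. z i)"
proof -
  define S where "S = (\<Sum>j<n. z j)"
  define c where "c = (1 - qinv2) * S"
  have e: "rotate_map n z i = qinv2 * z (Suc i mod n) + c * (if i = n - 1 then 1 else 0)" for i
    by (simp add: rotate_map_def S_def c_def)
  have "(\<Sum>i<n. rotate_map n z i) = (\<Sum>i<n. qinv2 * z (Suc i mod n)) + (\<Sum>i<n. c * (if i = n - 1 then 1 else 0))"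
    unfolding e by (rule sum.distrib)
  also have "(\<Sum>i<n. qinv2 * z (Suc i mod n)) = qinv2 * S"
    unfolding S_def sum_distrib_left[symmetric] sum_rotate[OF assms] ..
  also have "(\<Sum>i<n. c * (if i = n - 1 then 1 else 0)) = (\<Sum>i<n. if i = n - 1 then c else 0)"
    by (intro sum.cong) auto
  also have "\<dots> = c" using assms by (simp add: sum.delta)
  finally show ?thesis by (simp add: c_def S_def algebra_simps)
qed

lemma sum_rotate_map_funpow: "1 \<le> n \<Longrightarrow> (\<Sum>i<n. (rotate_map n ^^ m) z i) = (\<Sum>i<n. z i)"
  by (induction m) (simp_all add: sum_rotate_map)

lemma rotate_map_funpow:
  assumes n: "1 \<le> n"
  shows "i < n \<Longrightarrow> (rotate_map n ^^ m) z i =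
   qinv2 ^ m * z ((i + m) mod n) + (1 - qinv2) * (\<Sum>j<n. z j) * (\<Sum>k<m. qinv2 ^ k * (if (i + k) mod n = n - 1 then 1 else 0))"
proof (induction m arbitrary: i)
  case 0 thus ?case by simp
next
  case (Suc m)
  let ?S = "\<Sum>j<n. z j"
  have i1: "Suc i mod n < n" using n by simp
  have h1: "(rotate_map n ^^ Suc m) z i = qinv2 * (rotate_map n ^^ m) z (Suc i mod n) + (1 - qinv2) * ?S * (if i = n - 1 then 1 else 0)"
    using sum_rotate_map_funpow[OF n, of m z] by (simp add: rotate_map_def)
  have h2: "(rotate_map n ^^ m) z (Suc i mod n) = qinv2 ^ m * z ((i + Suc m) mod n) +
      (1 - qinv2) * ?S * (\<Sum>k<m. qinv2 ^ k * (if (i + Suc k) mod n = n - 1 then 1 else 0))"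
    using Suc.IH[OF i1] by (simp add: mod_add_left_eq)
  have h3: "(\<Sum>k<Suc m. qinv2 ^ k * (if (i + k) mod n = n - 1 then 1 else 0)) =
      (if i = n - 1 then 1 else 0) + qinv2 * (\<Sum>k<m. qinv2 ^ k * (if (i + Suc k) mod n = n - 1 then 1 else 0))"
    unfolding sum.lessThan_Suc_shift using Suc.prems by (simp add: sum_distrib_left mult_ac)
  show ?case unfolding h1 h2 h3 by (simp add: algebra_simps)
qed

lemma add_mod_eq_pred_iff:
  assumes "i < (n::nat)" "k < n"
  shows "((i + k) mod n = n - 1) = (k = n - 1 - i)"
proof (cases "i + k < n")
  case True
  hence "(i + k) mod n = i + k" by simp
  thus ?thesis using assms True by auto
next
  case False
  hence "(i + k) mod n = i + k - n" using assms by (simp add: le_mod_geq)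
  thus ?thesis using assms False by auto
qed

lemma rotate_map_funpow_self:
  assumes "1 \<le> n" "i < n"
  shows "(rotate_map n ^^ n) z i = qinv2 ^ n * z i + (1 - qinv2) * (\<Sum>j<n. z j) * qinv2 ^ (n - 1 - i)"
proof -
  have "(\<Sum>k<n. qinv2 ^ k * (if (i + k) mod n = n - 1 then 1 else 0)) = (\<Sum>k<n. if k = n - 1 - i then qinv2 ^ k else 0)"
  proof (rule sum.cong[OF refl])
    fix k assume "k \<in> {..<n}"
    hence e: "((i + k) mod n = n - 1) = (k = n - 1 - i)" using add_mod_eq_pred_iff assms by auto
    show "qinv2 ^ k * (if (i + k) mod n = n - 1 then 1 else 0) = (if k = n - 1 - i then qinv2 ^ k else 0)"
      unfolding e by simp
  qed
  also have "\<dots> = qinv2 ^ (n - 1 - i)" using assms by (simp add: sum.delta)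
  finally show ?thesis using rotate_map_funpow[OF assms(1) assms(2), of n z] assms by simp
qed

lemma rescale_cycle_map_funpow: "rescale ((cycle_map n ^^ m) x) = (cycle_map_rescaled n ^^ m) (rescale x)"
  by (induction m) (simp_all add: rescale_cycle_map)

lemma cycle_map_rescaled_funpow:
  assumes "1 \<le> n"
  shows "i < n \<Longrightarrow> (cycle_map_rescaled n ^^ m) z i = (rotate_map n ^^ m) z i"
proof (induction m arbitrary: i)
  case 0 thus ?case by simp
next
  case (Suc m)
  have "(cycle_map_rescaled n ^^ Suc m) z i = rotate_map n ((cycle_map_rescaled n ^^ m) z) i" using cycle_map_rescaled_eq_rotate_map[OF assms Suc.prems] by simp
  also have "\<dots> = rotate_map n ((rotate_map n ^^ m) z) i" by (rule rotate_map_cong) (use Suc.IH assms in auto)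
  finally show ?case by simp
qed

lemma cycle_map_funpow_eq_tau_normal_map:
  assumes n: "1 \<le> n" and j: "j < n"
  shows "(cycle_map n ^^ n) x j = tau_normal_map n x j"
proof -
  define S where "S = (\<Sum>i<n. qq ^ i * x i)"
  have A: "qq ^ j * (cycle_map n ^^ n) x j = qinv2 ^ n * (qq ^ j * x j) + (1 - qinv2) * S * qinv2 ^ (n - 1 - j)"
  proof -
    have "qq ^ j * (cycle_map n ^^ n) x j = rescale ((cycle_map n ^^ n) x) j" by (simp add: rescale_def)
    also have "\<dots> = (cycle_map_rescaled n ^^ n) (rescale x) j" by (simp add: rescale_cycle_map_funpow)
    also have "\<dots> = (rotate_map n ^^ n) (rescale x) j" by (rule cycle_map_rescaled_funpow[OF n j])
    also have "\<dots> = qinv2 ^ n * rescale x j + (1 - qinv2) * (\<Sum>i<n. rescale x i) * qinv2 ^ (n - 1 - j)"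
      by (rule rotate_map_funpow_self[OF n j])
    finally show ?thesis by (simp add: rescale_def S_def)
  qed
  have pm: "qq powi (- int k) = inverse qq ^ k" for k by (simp add: power_int_minus power_inverse)
  have se: "(\<Sum>i<n. E_coeff n i * x i) = inverse qq ^ (n - 1) * S"
    unfolding S_def sum_distrib_left E_coeff_eq[OF n] by (simp add: mult_ac)
  have g2: "qq powi (- (2 * int n)) = inverse qq ^ (2 * n)" using pm[of "2 * n"] by simp
  obtain r where r: "n = Suc (j + r)" using j by (metis add_Suc_right less_iff_Suc_add)
  have B: "qq ^ j * tau_normal_map n x j = qinv2 ^ n * (qq ^ j * x j) + (1 - qinv2) * S * qinv2 ^ (n - 1 - j)"
  proof -
    have "qq ^ j * tau_normal_map n x j = qq ^ j * (inverse qq ^ (2 * n) * (x j + (inverse qq ^ (n - 1) * S) * (qq ^ n * (qq - inverse qq) * qq ^ j)))"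
      by (simp only: tau_normal_map_def se g2 tau_mu_def F_coeff_def)
    also have "\<dots> = qinv2 ^ n * (qq ^ j * x j) + (1 - qinv2) * S * qinv2 ^ (n - 1 - j)"
      unfolding qinv2_def r
      by (simp add: field_simps qq_neq_0 power_add power_mult_distrib power2_eq_square mult_2_right)
    finally show ?thesis .
  qed
  have nz: "qq ^ j \<noteq> 0" by (simp add: qq_neq_0)
  have "qq ^ j * (cycle_map n ^^ n) x j = qq ^ j * tau_normal_map n x j" using A B by simp
  thus ?thesis using nz qq_neq_0 by simp
qed

lemma Phi_tau_eq_tau_normal:
  assumes "1 \<le> n" "v \<in> Vn n"
  shows "Phi_tau n v = tau_normal n v"
proof -
  have vac: "Phi_tau n (vacuum n) = tau_normal n (vacuum n)"
    using Phi_tau_vacuum[of n] tau_normal_vacuum[of n] by simp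
  show ?thesis
    using intertwiners_eq[OF lin_op_Phi_tau lin_op_tau_normal intertwines_Phi_tau intertwines_tau_normal
          cycle_map_funpow_eq_tau_normal_map[OF assms(1)] vac assms(2)] .
qed

section \<open>The generators of \<open>U\<close> as fermionic operators\<close>

lemma prod_one_factor_changed:
  assumes len: "length u = j + 1 + m" "length w = j + 1 + m"
    and f_other: "\<And>k. k < j + 1 + m \<Longrightarrow> k \<noteq> j \<Longrightarrow> f k = (if u!k = w!k then (if k < j then a else c) else 0)"
    and f_j: "f j = (if u!j = y0 \<and> w!j = x0 then 1 else 0)"
  shows "(\<Prod>k<j + 1 + m. f k) = (if w = u[j:=x0] \<and> u!j = y0 then a ^ j * c ^ m else (0::K))"
proof -
  let ?N = "j + 1 + m"
  have "(\<Prod>k<?N. f k) = f j * (\<Prod>k\<in>{..<?N} - {j}. f k)" by (rule prod.remove) auto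
  also have "{..<?N} - {j} = {..<j} \<union> {Suc j..<?N}" by auto
  finally have split: "(\<Prod>k<?N. f k) = f j * (\<Prod>k\<in>{..<j} \<union> {Suc j..<?N}. f k)" .
  show ?thesis
  proof (cases "w = u[j:=x0] \<and> u!j = y0")
    case True
    have "(\<Prod>k\<in>{..<j} \<union> {Suc j..<?N}. f k) = (\<Prod>k\<in>{..<j} \<union> {Suc j..<?N}. if k < j then a else c)"
      using len True by (intro prod.cong refl) (auto simp: f_other nth_list_update)
    also have "\<dots> = a ^ j * c ^ m" by (subst prod.union_disjoint) auto
    finally show ?thesis using split True len f_j by simp
  next
    case False
    have "\<exists>k<?N. f k = 0"
    proof (cases "u!j = y0 \<and> w!j = x0")
      case True
      with False have "w \<noteq> u[j:=x0]" by blast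
      then obtain k where k: "k < ?N" "w!k \<noteq> u[j:=x0]!k" using len by (auto simp: list_eq_iff_nth_eq)
      with True len have "k \<noteq> j" "u!k \<noteq> w!k" by (auto simp: nth_list_update split: if_splits)
      hence "f k = 0" using f_other[OF k(1)] by simp
      thus ?thesis using k(1) by blast
    next
      case False
      thus ?thesis using f_j by (intro exI[of _ j]) auto
    qed
    then obtain k where k: "k < ?N" "f k = 0" by blast
    have "(\<Prod>k<?N. f k) = 0" by (rule prod_zero[OF finite_lessThan]) (use k in blast)
    thus ?thesis unfolding if_not_P[OF False] .
  qed
qed

lemma tens_app_single_odd:
  assumes X: "X = replicate j (qh1 al al) @ B # replicate m (qh1 ga ga)"
    and B: "B = ((\<lambda>y x. if y = y0 \<and> x = x0 then 1 else 0), True)"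
    and u: "length u = j + 1 + m"
  shows "tens_app X v u =
    (if u!j = y0 then ksign u j * ((qq powi al) ^ j * (qq powi ga) ^ m) * v (u[j:=x0]) else 0)"
proof -
  let ?N = "j + 1 + m"
  have lX: "length X = ?N" using X by simp
  have Xk: "X ! k = (if k < j then qh1 al al else if k = j then B else qh1 ga ga)" if "k < ?N" for k
    using that unfolding X by (auto simp: nth_append nth_Cons')
  have sign: "card {(i, k). i < k \<and> k < length X \<and> snd (X ! k) \<and> w ! i} = ones_before w j" for w
  proof -
    have "{(i, k). i < k \<and> k < length X \<and> snd (X ! k) \<and> w ! i} = (\<lambda>i. (i, j)) ` {i. i < j \<and> w ! i}"
      using Xk lX B by (auto simp: qh1_def split: if_splits)
    thus ?thesis unfolding ones_before_def by (simp add: card_image inj_on_def)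
  qed
  have prod: "(\<Prod>k<?N. fst (X ! k) (u ! k) (w ! k)) =
      (if w = u[j:=x0] \<and> u!j = y0 then (qq powi al) ^ j * (qq powi ga) ^ m else 0)" if "length w = ?N" for w
    by (rule prod_one_factor_changed) (use u that Xk B in \<open>auto simp: qh1_def\<close>)
  have "tens_app X v u = (\<Sum>w\<in>basis ?N. tens_mat X u w * v w)"
    unfolding tens_app_def using lX u by simp
  also have "\<dots> = tens_mat X u (u[j:=x0]) * v (u[j:=x0])"
    by (rule sum_eq_single[OF finite_basis]) (use u prod in \<open>auto simp: basis_def tens_mat_def lX\<close>)
  also have "\<dots> = (if u!j = y0 then ksign u j * ((qq powi al) ^ j * (qq powi ga) ^ m) * v (u[j:=x0]) else 0)"
    using prod[of "u[j:=x0]"] u unfolding tens_mat_def sign unfolding lX by (simp add: ksign_def ones_before_update_ge)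
  finally show ?thesis .
qed

lemma DeltaE_explicit: "DeltaE (Suc m) = map (\<lambda>j. replicate j id1 @ E1 # replicate (m - j) Kinv1) [0..<Suc m]"
proof (induction m)
  case 0 thus ?case by simp
next
  case (Suc m)
  have "DeltaE (Suc (Suc m)) = map (\<lambda>t. t @ [Kinv1]) (DeltaE (Suc m)) @ [replicate (Suc m) id1 @ [E1]]" by simp
  also have "map (\<lambda>t. t @ [Kinv1]) (DeltaE (Suc m)) = map (\<lambda>j. replicate j id1 @ E1 # replicate (Suc m - j) Kinv1) [0..<Suc m]"
    unfolding Suc map_map by (intro map_cong refl) (auto simp: Suc_diff_le replicate_append_same)
  finally show ?case by simp
qed

lemma DeltaF_explicit: "DeltaF (Suc m) = map (\<lambda>j. replicate j K1 @ F1 # replicate (m - j) id1) [0..<Suc m]"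
proof (induction m)
  case 0 thus ?case by simp
next
  case (Suc m)
  have "DeltaF (Suc (Suc m)) = map (\<lambda>t. t @ [id1]) (DeltaF (Suc m)) @ [replicate (Suc m) K1 @ [F1]]" by simp
  also have "map (\<lambda>t. t @ [id1]) (DeltaF (Suc m)) = map (\<lambda>j. replicate j K1 @ F1 # replicate (Suc m - j) id1) [0..<Suc m]"
    unfolding Suc map_map by (intro map_cong refl) (auto simp: Suc_diff_le replicate_append_same)
  finally show ?case by simp
qed

lemma sum_list_map_upt_0: "sum_list (map f [0..<n]) = (\<Sum>j<n. f j :: 'a::comm_monoid_add)"
  by (simp add: sum_set_upt_conv_sum_list_nat[symmetric] atLeast0LessThan)

lemma tens_app_bad_length: "length u \<noteq> length X \<Longrightarrow> tens_app X v u = 0"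
  by (simp add: tens_app_def)

lemma Eop_eq_contract:
  assumes n: "1 \<le> n"
  shows "Eop n v = contract n (E_coeff n) v"
proof
  fix u
  obtain m where m: "n = Suc m" using n by (cases n) auto
  have "Eop n v u = (\<Sum>j<n. tens_app (replicate j id1 @ E1 # replicate (m - j) Kinv1) v u)"
    unfolding Eop_def sum_app_def m DeltaE_explicit map_map comp_def by (rule sum_list_map_upt_0)
  also have "\<dots> = contract n (E_coeff n) v u"
  proof (cases "length u = n")
    case False thus ?thesis by (simp add: tens_app_bad_length fermion_op_apply_bad_length m)
  next
    case True
    show ?thesis unfolding contract_apply[OF True]
    proof (rule sum.cong[OF refl])
      fix j assume j: "j \<in> {..<n}"
      have "tens_app (replicate j id1 @ E1 # replicate (m - j) Kinv1) v u =
        (if u!j = False then ksign u j * ((qq powi 0) ^ j * (qq powi (-1)) ^ (m - j)) * v (u[j:=True]) else 0)"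
        by (rule tens_app_single_odd[where B=E1]) (use True j m in \<open>auto simp: id1_def Kinv1_def E1_def\<close>)
      moreover have "(qq powi (-1)) ^ (m - j) = E_coeff n j"
        unfolding E_coeff_def power_int_power' using j m by simp
      ultimately show "tens_app (replicate j id1 @ E1 # replicate (m - j) Kinv1) v u =
         (if u!j then 0 else ksign u j * E_coeff n j * v (u[j:=True]))" by simp
    qed
  qed
  finally show "Eop n v u = contract n (E_coeff n) v u" .
qed

lemma Fop_eq_wedge:
  assumes n: "1 \<le> n"
  shows "Fop n v = wedge n F_coeff v"
proof
  fix u
  obtain m where m: "n = Suc m" using n by (cases n) auto
  have "Fop n v u = (\<Sum>j<n. tens_app (replicate j K1 @ F1 # replicate (m - j) id1) v u)"
    unfolding Fop_def sum_app_def m DeltaF_explicit map_map comp_def by (rule sum_list_map_upt_0)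
  also have "\<dots> = wedge n F_coeff v u"
  proof (cases "length u = n")
    case False thus ?thesis by (simp add: tens_app_bad_length fermion_op_apply_bad_length m)
  next
    case True
    show ?thesis unfolding wedge_apply[OF True]
    proof (rule sum.cong[OF refl])
      fix j assume j: "j \<in> {..<n}"
      have "tens_app (replicate j K1 @ F1 # replicate (m - j) id1) v u =
        (if u!j = True then ksign u j * ((qq powi 1) ^ j * (qq powi 0) ^ (m - j)) * v (u[j:=False]) else 0)"
        by (rule tens_app_single_odd[where B=F1]) (use True j m in \<open>auto simp: id1_def K1_def F1_def\<close>)
      thus "tens_app (replicate j K1 @ F1 # replicate (m - j) id1) v u =
         (if u!j then ksign u j * F_coeff j * v (u[j:=False]) else 0)" by (simp add: F_coeff_def)
    qed
  qed
  finally show "Fop n v u = wedge n F_coeff v u" .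
qed

lemma qhop_apply: "qhop n a b v u = (if length u = n then (\<Prod>k<n. if u!k then qq powi b else qq powi a) * v u else 0)"
proof (cases "length u = n")
  case False thus ?thesis by (simp add: qhop_def tens_app_bad_length)
next
  case len: True
  let ?X = "replicate n (qh1 a b)"
  have prod: "(\<Prod>k<n. fst (?X ! k) (u ! k) (w ! k)) = (if w = u then (\<Prod>k<n. if u!k then qq powi b else qq powi a) else 0)"
    if w: "length w = n" for w
  proof (cases "w = u")
    case True
    have "(\<Prod>k<n. fst (?X ! k) (u ! k) (w ! k)) = (\<Prod>k<n. if u!k then qq powi b else qq powi a)"
      by (rule prod.cong[OF refl]) (simp add: qh1_def True)
    thus ?thesis using True by simp
  next
    case False
    then obtain k where k: "k < n" "w!k \<noteq> u!k" using w len by (auto simp: list_eq_iff_nth_eq)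
    have "(\<Prod>k<n. fst (?X ! k) (u ! k) (w ! k)) = 0"
      by (rule prod_zero) (use k in \<open>auto simp: qh1_def intro!: bexI[of _ k]\<close>)
    thus ?thesis unfolding if_not_P[OF False] .
  qed
  have card: "card {(i, k). i < k \<and> k < length ?X \<and> snd (?X ! k) \<and> w ! i} = 0" for w
  proof -
    have e: "{(i, k). i < k \<and> k < length ?X \<and> snd (?X ! k) \<and> w ! i} = {}" by (auto simp: qh1_def)
    show ?thesis unfolding e by (rule card.empty)
  qed
  have "qhop n a b v u = (\<Sum>w\<in>basis n. tens_mat ?X u w * v w)"
    unfolding qhop_def tens_app_def using len by simp
  also have "\<dots> = tens_mat ?X u u * v u"
    by (rule sum_eq_single[OF finite_basis]) (use len prod in \<open>auto simp: basis_def tens_mat_def\<close>)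
  also have "\<dots> = (\<Prod>k<n. if u!k then qq powi b else qq powi a) * v u"
    unfolding tens_mat_def card using prod[of u] len by simp
  finally show ?thesis using len by simp
qed

lemma prod_if_num_odd:
  assumes "length u = n"
  shows "(\<Prod>k<n. if u!k then B else A) = B ^ num_odd u * (A::K) ^ (n - num_odd u)"
proof -
  have fin: "finite {..<n}" by simp
  have c1: "card ({..<n} \<inter> {k. u!k}) = num_odd u"
    unfolding num_odd_def ones_before_def assms by (rule arg_cong[where f=card]) auto
  have c2: "card ({..<n} \<inter> - {k. u!k}) = n - num_odd u"
  proof -
    have "{..<n} \<inter> - {k. u!k} = {..<n} - ({..<n} \<inter> {k. u!k})" by auto
    hence "card ({..<n} \<inter> - {k. u!k}) = card {..<n} - card ({..<n} \<inter> {k. u!k})"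
      by (simp add: card_Diff_subset)
    thus ?thesis using c1 by simp
  qed
  show ?thesis unfolding prod.If_cases[OF fin] using c1 c2 by simp
qed

lemma qhop_eq_num_odd: "qhop n a b v u = (if length u = n then qq powi (a * (int n - int (num_odd u)) + b * int (num_odd u)) * v u else 0)"
proof (cases "length u = n")
  case True
  have w: "num_odd u \<le> n" using num_odd_le_length[of u] True by simp
  have "(qq powi b) ^ num_odd u * (qq powi a) ^ (n - num_odd u) = qq powi (b * int (num_odd u)) * qq powi (a * int (n - num_odd u))"
    by (simp add: power_int_power')
  also have "\<dots> = qq powi (a * (int n - int (num_odd u)) + b * int (num_odd u))"
    unfolding qq_powi_add using w by (simp add: algebra_simps of_nat_diff)
  finally show ?thesis using True by (simp add: qhop_apply prod_if_num_odd)
qed (simp add: qhop_apply)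

section \<open>The decomposition \<open>V\<^sup>\<otimes>\<^sup>n = \<Oplus>\<^sub>k W\<^sub>k\<close>\<close>

definition homogeneous :: "nat \<Rightarrow> vec \<Rightarrow> bool" where
  "homogeneous m v \<longleftrightarrow> (\<forall>u. v u \<noteq> 0 \<longrightarrow> num_odd u = m)"

lemma H_iff:
  assumes n: "1 \<le> n"
  shows "v \<in> H n k \<longleftrightarrow> v \<in> Vn n \<and> contract n (E_coeff n) v = (\<lambda>_. 0) \<and> homogeneous k v"
proof
  assume h: "v \<in> H n k"
  hence v: "v \<in> Vn n" "Eop n v = (\<lambda>_. 0)" and q: "\<And>a b. qhop n a b v = smult_vec (qq powi (a * (int n - int k) + b * int k)) v"
    unfolding H_def by auto
  have "homogeneous k v" unfolding homogeneous_def
  proof (intro allI impI)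
    fix u assume vu: "v u \<noteq> 0"
    hence l: "length u = n" using v by (auto simp: Vn_def)
    have "qhop n 0 1 v u = smult_vec (qq powi (0 * (int n - int k) + 1 * int k)) v u" using q by simp
    hence "qq ^ num_odd u * v u = qq ^ k * v u" by (simp add: qhop_eq_num_odd l smult_vec_def)
    hence "qq ^ num_odd u = qq ^ k" using vu by simp
    thus "num_odd u = k" by (rule qq_power_inject)
  qed
  thus "v \<in> Vn n \<and> contract n (E_coeff n) v = (\<lambda>_. 0) \<and> homogeneous k v" using v Eop_eq_contract[OF n] by simp
next
  assume h: "v \<in> Vn n \<and> contract n (E_coeff n) v = (\<lambda>_. 0) \<and> homogeneous k v"
  have "qhop n a b v = smult_vec (qq powi (a * (int n - int k) + b * int k)) v" for a b
  proof
    fix u show "qhop n a b v u = smult_vec (qq powi (a * (int n - int k) + b * int k)) v u"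
    proof (cases "v u = 0")
      case True thus ?thesis by (simp add: qhop_eq_num_odd smult_vec_def)
    next
      case False
      hence "num_odd u = k" "length u = n" using h by (auto simp: homogeneous_def Vn_def)
      thus ?thesis by (simp add: qhop_eq_num_odd smult_vec_def)
    qed
  qed
  thus "v \<in> H n k" using h Eop_eq_contract[OF n] unfolding H_def by simp
qed

lemma homogeneous_wedge:
  assumes "homogeneous m v"
  shows "homogeneous (Suc m) (wedge n x v)"
  unfolding homogeneous_def
proof (intro allI impI)
  fix u assume h: "wedge n x v u \<noteq> 0"
  hence l: "length u = n" by (metis fermion_op_apply_bad_length)
  have "\<exists>j<n. u!j \<and> v (u[j:=False]) \<noteq> 0"
  proof (rule ccontr)
    assume "\<not> ?thesis"
    hence "wedge n x v u = 0" unfolding wedge_apply[OF l] by (intro sum.neutral) auto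
    thus False using h by simp
  qed
  then obtain j where j: "j < n" "u!j" "v (u[j:=False]) \<noteq> 0" by blast
  hence "num_odd (u[j:=False]) = m" using assms by (simp add: homogeneous_def)
  moreover have "num_odd (u[j:=False]) + 1 = num_odd u" using num_odd_update[of j u False] j l by simp
  ultimately show "num_odd u = Suc m" by simp
qed

lemma homogeneous_contract_nonzero:
  assumes "homogeneous m v" "contract n b v u \<noteq> 0"
  shows "Suc (num_odd u) = m"
proof -
  have l: "length u = n" using assms(2) by (metis fermion_op_apply_bad_length)
  have "\<exists>j<n. \<not> u!j \<and> v (u[j:=True]) \<noteq> 0"
  proof (rule ccontr)
    assume "\<not> ?thesis"
    hence "contract n b v u = 0" unfolding contract_apply[OF l] by (intro sum.neutral) auto
    thus False using assms(2) by simp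
  qed
  then obtain j where j: "j < n" "\<not> u!j" "v (u[j:=True]) \<noteq> 0" by blast
  hence "num_odd (u[j:=True]) = m" using assms by (simp add: homogeneous_def)
  moreover have "num_odd (u[j:=True]) = num_odd u + 1" using num_odd_update[of j u True] j l by simp
  ultimately show ?thesis by simp
qed

lemma homogeneous_contract: "homogeneous (Suc m) v \<Longrightarrow> homogeneous m (contract n b v)"
  unfolding homogeneous_def using homogeneous_contract_nonzero[unfolded homogeneous_def] by (metis Suc_inject)

lemma contract_homogeneous_0: "homogeneous 0 v \<Longrightarrow> contract n b v = (\<lambda>_. 0)"
  using homogeneous_contract_nonzero by fastforce

lemma homogeneous_smult: "homogeneous m v \<Longrightarrow> homogeneous m (\<lambda>u. c * v u)"
  by (simp add: homogeneous_def)

lemma wedge_homogeneous_top: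
  assumes "homogeneous n v"
  shows "wedge n x v = (\<lambda>_. 0)"
proof
  fix u show "wedge n x v u = 0"
  proof (rule ccontr)
    assume h: "wedge n x v u \<noteq> 0"
    hence "num_odd u = Suc n" using homogeneous_wedge[OF assms] by (simp add: homogeneous_def)
    moreover have "length u = n" using h by (metis fermion_op_apply_bad_length)
    ultimately show False using num_odd_le_length[of u] by simp
  qed
qed

definition weight_part :: "nat \<Rightarrow> vec \<Rightarrow> vec" where
  "weight_part k v = (\<lambda>u. if num_odd u = k then v u else 0)"

lemma homogeneous_weight_part: "homogeneous k (weight_part k v)"
  by (simp add: homogeneous_def weight_part_def)

lemma weight_part_Vn: "v \<in> Vn n \<Longrightarrow> weight_part k v \<in> Vn n"
  by (simp add: Vn_def weight_part_def)

text \<open>\<open>EF + FE\<close> acts as \<open>(K - K\<^sup>-\<^sup>1)/(q - q\<^sup>-\<^sup>1)\<close>, i.e. by the quantum integer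
  \<open>EF_scalar n = [n]\<^sub>q\<close>; its invertibility is what splits \<open>V\<^sup>\<otimes>\<^sup>n\<close> into the \<open>W\<^sub>k\<close>.\<close>

definition EF_scalar :: "nat \<Rightarrow> K" where
  "EF_scalar n = (\<Sum>i<n. E_coeff n i * F_coeff i)"

lemma one_plus_tau_mu_EF_scalar:
  assumes "1 \<le> n"
  shows "1 + tau_mu n * EF_scalar n = qq ^ (2 * n)"
proof -
  have "EF_scalar n = inverse qq ^ (n - 1) * (\<Sum>i<n. (qq ^ 2) ^ i)"
    unfolding EF_scalar_def E_coeff_eq[OF assms] F_coeff_def sum_distrib_left by (intro sum.cong refl) (simp add: power_mult_distrib[symmetric] power_mult[symmetric] mult_ac power2_eq_square)
  hence "tau_mu n * EF_scalar n = (qq ^ n * inverse qq ^ (n - 1)) * (qq - inverse qq) * (\<Sum>i<n. (qq ^ 2) ^ i)"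
    by (simp add: tau_mu_def mult_ac)
  also have "qq ^ n * inverse qq ^ (n - 1) = qq"
  proof -
    obtain m where "n = Suc m" using assms by (cases n) auto
    thus ?thesis by (simp add: qq_neq_0 power_inverse[symmetric] field_simps)
  qed
  also have "qq * (qq - inverse qq) = qq ^ 2 - 1" by (simp add: qq_neq_0 field_simps power2_eq_square)
  also have "(qq ^ 2 - 1) * (\<Sum>i<n. (qq ^ 2) ^ i) = (qq ^ 2) ^ n - 1" by (rule power_diff_1_eq[symmetric])
  finally show ?thesis by (simp add: power_mult)
qed

lemma EF_scalar_neq_0:
  assumes "1 \<le> n"
  shows "EF_scalar n \<noteq> 0"
proof
  assume "EF_scalar n = 0"
  hence "qq ^ (2 * n) = qq ^ 0" using one_plus_tau_mu_EF_scalar[OF assms] by simp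
  hence "2 * n = 0" by (rule qq_power_inject)
  thus False using assms by simp
qed

lemma contract_E_wedge_F:
  "v \<in> Vn n \<Longrightarrow>
   contract n (E_coeff n) (wedge n F_coeff v) = (\<lambda>u. EF_scalar n * v u - wedge n F_coeff (contract n (E_coeff n) v) u)"
  unfolding EF_scalar_def by (rule contract_wedge)

lemma tau_exponent:
  assumes "1 \<le> n"
  shows "qq ^ (n * (n - 1)) * qq powi (- (2 * int n * int k)) = qq powi (int n * (int n - 1 - 2 * int k))"
proof -
  have "qq ^ (n * (n - 1)) * qq powi (- (2 * int n * int k)) = qq powi (int (n * (n - 1)) + - (2 * int n * int k))"
    by (simp only: qq_powi_add[symmetric] power_int_of_nat)
  also have "int (n * (n - 1)) + - (2 * int n * int k) = int n * (int n - 1 - 2 * int k)"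
    using assms by (simp add: of_nat_diff algebra_simps)
  finally show ?thesis .
qed

lemma tau_exponent_Suc:
  assumes "1 \<le> n"
  shows "qq ^ (n * (n - 1)) * qq powi (- (2 * int n * int (Suc k))) * qq ^ (2 * n) = qq powi (int n * (int n - 1 - 2 * int k))"
proof -
  have "qq ^ (n * (n - 1)) * qq powi (- (2 * int n * int (Suc k))) * qq ^ (2 * n) =
     qq powi (int (n * (n - 1)) + - (2 * int n * int (Suc k)) + int (2 * n))"
    by (simp only: qq_powi_add[symmetric] power_int_of_nat)
  also have "int (n * (n - 1)) + - (2 * int n * int (Suc k)) + int (2 * n) = int n * (int n - 1 - 2 * int k)"
    using assms by (simp add: of_nat_diff algebra_simps)
  finally show ?thesis .
qed

lemma tau_normal_H:
  assumes n: "1 \<le> n" and x: "x \<in> H n k"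
  shows "tau_normal n x = (\<lambda>u. qq powi (int n * (int n - 1 - 2 * int k)) * x u)"
proof -
  have c: "contract n (E_coeff n) x = (\<lambda>_. 0)" "homogeneous k x" using x H_iff[OF n] by auto
  have A: "one_plus_FE n x = x" unfolding one_plus_FE_def c(1) fermion_op_zero by simp
  show ?thesis
  proof
    fix u
    have "tau_normal n x u = qq ^ (n * (n - 1)) * qq powi (- (2 * int n * int (num_odd u))) * x u"
      by (simp add: tau_normal_def A weight_twist_def)
    also have "\<dots> = qq powi (int n * (int n - 1 - 2 * int k)) * x u"
    proof (cases "x u = 0")
      case False hence "num_odd u = k" using c(2) by (simp add: homogeneous_def)
      thus ?thesis using tau_exponent[OF n, of k] by simp
    qed simp
    finally show "tau_normal n x u = qq powi (int n * (int n - 1 - 2 * int k)) * x u" .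
  qed
qed

lemma tau_normal_FH:
  assumes n: "1 \<le> n" and y: "y \<in> H n k"
  shows "tau_normal n (wedge n F_coeff y) = (\<lambda>u. qq powi (int n * (int n - 1 - 2 * int k)) * wedge n F_coeff y u)"
proof -
  have c: "y \<in> Vn n" "contract n (E_coeff n) y = (\<lambda>_. 0)" "homogeneous k y" using y H_iff[OF n] by auto
  have ef: "contract n (E_coeff n) (wedge n F_coeff y) = (\<lambda>u. EF_scalar n * y u)"
    unfolding contract_E_wedge_F[OF c(1)] c(2) fermion_op_zero by simp
  have A: "one_plus_FE n (wedge n F_coeff y) = (\<lambda>u. qq ^ (2 * n) * wedge n F_coeff y u)"
  proof -
    have "one_plus_FE n (wedge n F_coeff y) = (\<lambda>u. wedge n F_coeff y u + tau_mu n * (EF_scalar n * wedge n F_coeff y u))"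
      unfolding one_plus_FE_def ef by (simp add: fermion_op_smult_coeff fermion_op_smult)
    also have "\<dots> = (\<lambda>u. (1 + tau_mu n * EF_scalar n) * wedge n F_coeff y u)" by (simp add: algebra_simps)
    finally show ?thesis unfolding one_plus_tau_mu_EF_scalar[OF n] .
  qed
  have s: "homogeneous (Suc k) (wedge n F_coeff y)" by (rule homogeneous_wedge[OF c(3)])
  show ?thesis
  proof
    fix u
    have "tau_normal n (wedge n F_coeff y) u = qq ^ (n * (n - 1)) * qq powi (- (2 * int n * int (num_odd u))) * (qq ^ (2 * n) * wedge n F_coeff y u)"
      by (simp add: tau_normal_def A weight_twist_def)
    also have "\<dots> = qq powi (int n * (int n - 1 - 2 * int k)) * wedge n F_coeff y u"
    proof (cases "wedge n F_coeff y u = 0")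
      case False hence "num_odd u = Suc k" using s by (simp add: homogeneous_def)
      thus ?thesis using tau_exponent_Suc[OF n, of k] by (simp add: mult_ac)
    qed simp
    finally show "tau_normal n (wedge n F_coeff y) u = qq powi (int n * (int n - 1 - 2 * int k)) * wedge n F_coeff y u" .
  qed
qed

definition H_part :: "nat \<Rightarrow> vec \<Rightarrow> nat \<Rightarrow> vec" where
  "H_part n v k = (\<lambda>u. inverse (EF_scalar n) * contract n (E_coeff n) (wedge n F_coeff (weight_part k v)) u)"

definition FH_part :: "nat \<Rightarrow> vec \<Rightarrow> nat \<Rightarrow> vec" where
  "FH_part n v k = (\<lambda>u. inverse (EF_scalar n) * contract n (E_coeff n) (weight_part (Suc k) v) u)"

definition W_part :: "nat \<Rightarrow> vec \<Rightarrow> nat \<Rightarrow> vec" where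
  "W_part n v k = (\<lambda>u. H_part n v k u + wedge n F_coeff (FH_part n v k) u)"

lemma smult_Vn: "z \<in> Vn n \<Longrightarrow> (\<lambda>u. c * z u) \<in> Vn n"
  by (simp add: Vn_def)

lemma H_part_H:
  assumes n: "1 \<le> n"
  shows "H_part n v k \<in> H n k"
  unfolding H_iff[OF n]
proof (intro conjI)
  show "H_part n v k \<in> Vn n" unfolding H_part_def by (rule smult_Vn) (rule fermion_op_Vn)
  show "contract n (E_coeff n) (H_part n v k) = (\<lambda>_. 0)" unfolding H_part_def fermion_op_smult fermion_op_square by simp
  show "homogeneous k (H_part n v k)" unfolding H_part_def
    by (rule homogeneous_smult, rule homogeneous_contract, rule homogeneous_wedge, rule homogeneous_weight_part)
qed

lemma FH_part_H:
  assumes n: "1 \<le> n"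
  shows "FH_part n v k \<in> H n k"
  unfolding H_iff[OF n]
proof (intro conjI)
  show "FH_part n v k \<in> Vn n" unfolding FH_part_def by (rule smult_Vn) (rule fermion_op_Vn)
  show "contract n (E_coeff n) (FH_part n v k) = (\<lambda>_. 0)" unfolding FH_part_def fermion_op_smult fermion_op_square by simp
  show "homogeneous k (FH_part n v k)" unfolding FH_part_def
    by (rule homogeneous_smult, rule homogeneous_contract, rule homogeneous_weight_part)
qed

lemma W_part_W:
  assumes n: "1 \<le> n"
  shows "W_part n v k \<in> W n k"
  unfolding W_def W_part_def Fop_eq_wedge[OF n, symmetric] using H_part_H[OF n] FH_part_H[OF n] by blast

lemma sum_weight_part:
  assumes "v \<in> Vn n"
  shows "(\<Sum>k<Suc n. weight_part k v u) = v u"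
proof (cases "length u = n")
  case True
  have "num_odd u < Suc n" using num_odd_le_length[of u] True by simp
  thus ?thesis by (simp add: weight_part_def sum.delta')
next
  case False thus ?thesis using assms by (simp add: weight_part_def Vn_def)
qed

lemma sum_W_part:
  assumes n: "1 \<le> n" and v: "v \<in> Vn n"
  shows "v = (\<lambda>u. \<Sum>k<n. W_part n v k u)"
proof
  fix u
  let ?E = "contract n (E_coeff n)" and ?F = "wedge n F_coeff" and ?R = "\<lambda>j. weight_part j v"
  have ef: "?E (?F (?R j)) u + ?F (?E (?R j)) u = EF_scalar n * ?R j u" for j
    using contract_E_wedge_F[OF weight_part_Vn[OF v], of j] by (simp add: fun_eq_iff)
  have top: "?E (?F (?R n)) u = 0" unfolding wedge_homogeneous_top[OF homogeneous_weight_part] fermion_op_zero by simp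
  have bot: "?F (?E (?R 0)) u = 0" unfolding contract_homogeneous_0[OF homogeneous_weight_part] fermion_op_zero by simp
  have "EF_scalar n * v u = (\<Sum>k<Suc n. EF_scalar n * ?R k u)"
    by (subst sum_weight_part[OF v, of u, symmetric]) (rule sum_distrib_left)
  also have "\<dots> = (\<Sum>k<Suc n. ?E (?F (?R k)) u) + (\<Sum>k<Suc n. ?F (?E (?R k)) u)"
    by (simp add: ef[symmetric] sum.distrib)
  also have "(\<Sum>k<Suc n. ?E (?F (?R k)) u) = (\<Sum>k<n. ?E (?F (?R k)) u)" using top by simp
  also have "(\<Sum>k<Suc n. ?F (?E (?R k)) u) = (\<Sum>k<n. ?F (?E (?R (Suc k))) u)"
    unfolding sum.lessThan_Suc_shift using bot by simp
  finally have *: "EF_scalar n * v u = (\<Sum>k<n. ?E (?F (?R k)) u) + (\<Sum>k<n. ?F (?E (?R (Suc k))) u)" .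
  have "(\<Sum>k<n. W_part n v k u) = inverse (EF_scalar n) * ((\<Sum>k<n. ?E (?F (?R k)) u) + (\<Sum>k<n. ?F (?E (?R (Suc k))) u))"
    by (simp add: W_part_def H_part_def FH_part_def fermion_op_smult sum.distrib sum_distrib_left algebra_simps)
  also have "\<dots> = v u" unfolding *[symmetric] using EF_scalar_neq_0[OF n] by simp
  finally show "v u = (\<Sum>k<n. W_part n v k u)" by simp
qed

lemma lin_op_W_part: "lin_op (\<lambda>v. W_part n v k)"
proof -
  have "weight_part j (\<lambda>u. v1 u + v2 u) = (\<lambda>u. weight_part j v1 u + weight_part j v2 u)"
    "weight_part j (\<lambda>u. c * v u) = (\<lambda>u. c * weight_part j v u)" for j v1 v2 c v
    by (auto simp: weight_part_def)
  thus ?thesis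
    by (simp add: lin_op_def W_part_def H_part_def FH_part_def fermion_op_add fermion_op_smult algebra_simps)
qed

lemma weight_part_H_plus_FH:
  assumes x: "x \<in> H n j" and y: "y \<in> H n j" and n: "1 \<le> n"
  shows "weight_part k (\<lambda>u. x u + wedge n F_coeff y u) =
    (if k = j then x else if k = Suc j then wedge n F_coeff y else (\<lambda>_. 0))"
proof -
  have "homogeneous j x" "homogeneous (Suc j) (wedge n F_coeff y)"
    using x y homogeneous_wedge by (auto simp: H_iff[OF n])
  hence "x u = 0" if "num_odd u \<noteq> j" for u
    using that unfolding homogeneous_def by blast
  moreover have "wedge n F_coeff y u = 0" if "num_odd u \<noteq> Suc j" for u
    using that \<open>homogeneous (Suc j) _\<close> unfolding homogeneous_def by blast
  ultimately show ?thesis by (auto simp: weight_part_def fun_eq_iff)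
qed

lemma W_part_H_plus_FH:
  assumes n: "1 \<le> n" and x: "x \<in> H n j" and y: "y \<in> H n j"
  shows "W_part n (\<lambda>u. x u + wedge n F_coeff y u) k =
    (if k = j then (\<lambda>u. x u + wedge n F_coeff y u) else (\<lambda>_. 0))"
proof -
  let ?E = "contract n (E_coeff n)" and ?F = "wedge n F_coeff" and ?w = "\<lambda>u. x u + wedge n F_coeff y u"
  have Ex: "?E x = (\<lambda>_. 0)" and Ey: "?E y = (\<lambda>_. 0)" and Vx: "x \<in> Vn n" and Vy: "y \<in> Vn n"
    using x y by (auto simp: H_iff[OF n])
  have EFx: "?E (?F x) = (\<lambda>u. EF_scalar n * x u)" and EFy: "?E (?F y) = (\<lambda>u. EF_scalar n * y u)"
    unfolding contract_E_wedge_F[OF Vx] contract_E_wedge_F[OF Vy] Ex Ey fermion_op_zero by simp_all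
  have inv: "inverse (EF_scalar n) * (EF_scalar n * z) = z" for z
    using EF_scalar_neq_0[OF n] by simp
  have "H_part n ?w k = (if k = j then x else (\<lambda>_. 0))"
    unfolding H_part_def weight_part_H_plus_FH[OF x y n]
    by (simp add: EFx fermion_op_square fermion_op_zero inv)
  moreover have "FH_part n ?w k = (if k = j then y else (\<lambda>_. 0))"
    unfolding FH_part_def weight_part_H_plus_FH[OF x y n]
    by (simp add: Ex EFy fermion_op_zero inv)
  ultimately show ?thesis unfolding W_part_def by (simp add: fermion_op_zero)
qed

lemma W_E:
  assumes "w \<in> W n k" "1 \<le> n"
  obtains x y where "x \<in> H n k" "y \<in> H n k" "w = (\<lambda>u. x u + wedge n F_coeff y u)"
  using assms unfolding W_def Fop_eq_wedge[OF assms(2)] by blast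

lemma proj_eq_W_part:
  assumes n: "1 \<le> n" and v: "v \<in> Vn n" and k: "k < n"
  shows "proj n k v = W_part n v k"
  unfolding proj_def
proof (rule the_equality)
  show "\<exists>ws. (\<forall>j<n. ws j \<in> W n j) \<and> v = (\<lambda>w. \<Sum>j<n. ws j w) \<and> W_part n v k = ws k"
    using W_part_W[OF n] sum_W_part[OF n v] by blast
next
  fix z assume "\<exists>ws. (\<forall>j<n. ws j \<in> W n j) \<and> v = (\<lambda>w. \<Sum>j<n. ws j w) \<and> z = ws k"
  then obtain ws where ws: "\<And>j. j < n \<Longrightarrow> ws j \<in> W n j" and v_sum: "v = (\<lambda>w. \<Sum>j<n. 1 * ws j w)"
    and z: "z = ws k" by auto
  have comp: "W_part n (ws j) k = (if k = j then ws j else (\<lambda>_. 0))" if j: "j < n" for j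
  proof -
    obtain x y where "x \<in> H n j" "y \<in> H n j" "ws j = (\<lambda>u. x u + wedge n F_coeff y u)"
      using ws[OF j] n by (rule W_E)
    thus ?thesis using W_part_H_plus_FH[OF n] by simp
  qed
  have "W_part n v k = (\<lambda>u. \<Sum>j<n. 1 * W_part n (ws j) k u)"
    unfolding v_sum by (rule lin_op_sum[OF _ lin_op_W_part]) simp
  also have "\<dots> = ws k" using k by (simp add: comp if_distrib[of "\<lambda>f. f _"] cong: if_cong)
  finally show "z = W_part n v k" using z by simp
qed

lemma tau_normal_W:
  assumes n: "1 \<le> n" and w: "w \<in> W n k"
  shows "tau_normal n w = (\<lambda>u. qq powi (int n * (int n - 1 - 2 * int k)) * w u)"
proof -
  obtain x y where xy: "x \<in> H n k" "y \<in> H n k" and w_eq: "w = (\<lambda>u. x u + wedge n F_coeff y u)"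
    using w n by (rule W_E)
  show ?thesis
    unfolding w_eq lin_op_add[OF lin_op_tau_normal] tau_normal_H[OF n xy(1)] tau_normal_FH[OF n xy(2)]
    by (simp add: algebra_simps)
qed

theorem corollary4p3:
  fixes n :: nat
  assumes "n \<ge> 2"
  shows "\<forall>v \<in> Vn n. Phi_tau n v =
           (\<lambda>w. \<Sum>k<n. smult_vec (qq powi (int n * (int n - 1 - 2 * int k))) (proj n k v) w)"
proof
  fix v assume v: "v \<in> Vn n"
  have n: "1 \<le> n" using assms by simp
  have "Phi_tau n v = tau_normal n (\<lambda>u. \<Sum>k\<in>{..<n}. 1 * W_part n v k u)"
    using Phi_tau_eq_tau_normal[OF n v] sum_W_part[OF n v] by simp
  also have "\<dots> = (\<lambda>u. \<Sum>k\<in>{..<n}. 1 * tau_normal n (W_part n v k) u)"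
    by (rule lin_op_sum[OF _ lin_op_tau_normal]) simp
  also have "\<dots> = (\<lambda>w. \<Sum>k<n. smult_vec (qq powi (int n * (int n - 1 - 2 * int k))) (proj n k v) w)"
    by (simp add: tau_normal_W[OF n W_part_W[OF n]] proj_eq_W_part[OF n v] smult_vec_def)
  finally show "Phi_tau n v =
      (\<lambda>w. \<Sum>k<n. smult_vec (qq powi (int n * (int n - 1 - 2 * int k))) (proj n k v) w)" .
qed

end
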